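(* Let $\psi$ be an admissible modulus and $\varphi$ an admissible order function with $I_\psi\subset(0,1)$, $M_\varphi<1$, $I_{\varphi\psi}\subset(0,1)\cup(1,2)$, $[m_{\varphi\psi},M_{\varphi\psi}]\cap\mathbb{N}=\emptyset$ and $\max(M_\varphi,M_\psi)<m_{\varphi\psi}$. Let $a:\mathbb{R}^d\times\mathbb{R}^d\to[\Lambda_1,\Lambda_2]$ ($0<\Lambda_1\le\Lambda_2$) satisfy $\sup_x\sup_{|h|>0}|a(x+z,h)-a(x,h)|\le\Lambda_3\psi(|z|)$ for $|z|\le1$, with $\Lambda_3\ge1$. For $x_0\in\mathbb{R}^d$ set $b(x,h)=a(x,h)-a(x_0,h)$ and $$\mathcal{B}v(x)=\int_{\mathbb{R}^d}(v(x+h)-v(x))\frac{b(x,h)}{|h|^d\varphi(|h|)}\,dh.$$ Then for every $\varepsilon>0$ there exist $r=r(\varepsilon)\in(0,1/4)$ and $C=C(\varepsilon)>0$ such that for every $x_0\in\mathbb{R}^d$ and every $v\in C^{\varphi\psi}(\mathbb{R}^d)$ with support in $B(x_0,2r)$, $$\|\mathcal{B}v\|_{C^\psi}\le C\|v\|_{C^0}+\varepsilon\|v\|_{C^{\varphi\psi}}.$$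
   Context: Almost increasing/decreasing: $g:(0,1]\to(0,\infty)$ is almost increasing if $c\,g(r)\le g(R)$ for some $c\in(0,1]$ and all $0<r\le R\le1$, almost decreasing if $g(R)\le Cg(r)$ for some $C\ge1$ and all $0<r\le R\le1$. $M_g=\inf\{\alpha: g(r)/r^\alpha\text{ almost decreasing}\}$, $m_g=\sup\{\alpha: g(r)/r^\alpha\text{ almost increasing}\}$, $I_g=[m_g,M_g]$. Admissible modulus: $\psi:(0,1]\to(0,\infty)$, $\psi(1)=1$, $\psi(r)\to0$ as $r\to0+$. Admissible order function: smooth $\varphi:(0,\infty)\to(0,\infty)$, $\varphi(1)=1$, with $\phi(r)=\varphi(r^{-1/2})^{-1}$ a Bernstein function ($\phi\ge0$, $C^\infty$, $(-1)^n\phi^{(n)}\le0$ for $n\ge1$) and $a_1\lambda^{2\delta_1}\varphi(r)\le\varphi(\lambda r)\le a_2\lambda^{2\delta_2}\varphi(r)$ for $\lambda\ge1,r>0$, some $0<\delta_1\le\delta_2<1$, $a_1\in(0,1]$, $a_2\ge1$. Indices of $\varphi$ refer to its restriction to $(0,1]$; $\varphi\psi$ is the product on $(0,1]$. $\mathbb{N}=\{1,2,\dots\}$. $\|f\|_{C^0}=\sup|f|$, $\|D^jf\|_{C^0}=\max_{|\gamma|=j}\|D^\gamma f\|_{C^0}$; $[f]_{C^{-j;g}}=\sup_x\sup_{0<|h|\le1}\frac{|f(x+h)-f(x)|}{g(|h|)|h|^{-j}}$. If $m_g\in(k,k+1]$, $k\in\mathbb{N}_0$, $C^g(\mathbb{R}^d)$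 is the set of continuous $f$ with $D^\gamma f$ bounded continuous for $|\gamma|\le k$ and $[D^\gamma f]_{C^{-k;g}}<\infty$ for $|\gamma|=k$, norm $\|f\|_{C^g}=\sum_{j\le k}\|D^jf\|_{C^0}+\max_{|\gamma|=k}[D^\gamma f]_{C^{-k;g}}$. *)

theory Defs
  imports "HOL-Analysis.Analysis"
begin

definition almost_increasing :: "(real \<Rightarrow> real) \<Rightarrow> bool" where
  "almost_increasing g \<longleftrightarrow>
     (\<exists>c. 0 < c \<and> c \<le> 1 \<and> (\<forall>r R. 0 < r \<and> r \<le> R \<and> R \<le> 1 \<longrightarrow> c * g r \<le> g R))"

definition almost_decreasing :: "(real \<Rightarrow> real) \<Rightarrow> bool" where
  "almost_decreasing g \<longleftrightarrow>
     (\<exists>C. 1 \<le> C \<and> (\<forall>r R. 0 < r \<and> r \<le> R \<and> R \<le> 1 \<longrightarrow> g R \<le> C * g r))"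

text \<open>Upper index M_g and lower index m_g, valued in the extended reals
  (inf of the empty set is +infinity, sup of the empty set is -infinity).\<close>

definition upper_index :: "(real \<Rightarrow> real) \<Rightarrow> ereal" where
  "upper_index g = Inf {ereal \<alpha> | \<alpha>. almost_decreasing (\<lambda>r. g r / r powr \<alpha>)}"

definition lower_index :: "(real \<Rightarrow> real) \<Rightarrow> ereal" where
  "lower_index g = Sup {ereal \<alpha> | \<alpha>. almost_increasing (\<lambda>r. g r / r powr \<alpha>)}"

definition admissible_modulus :: "(real \<Rightarrow> real) \<Rightarrow> bool" where
  "admissible_modulus \<psi> \<longleftrightarrow>
     (\<forall>r. 0 < r \<and> r \<le> 1 \<longrightarrow> 0 < \<psi> r) \<and> \<psi> 1 = 1 \<and> (\<psi> \<longlongrightarrow> 0) (at_right 0)"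

definition smooth_on :: "real set \<Rightarrow> (real \<Rightarrow> real) \<Rightarrow> bool" where
  "smooth_on S f \<longleftrightarrow> (\<forall>n. \<forall>x\<in>S. (deriv ^^ n) f differentiable (at x))"

definition bernstein_function :: "(real \<Rightarrow> real) \<Rightarrow> bool" where
  "bernstein_function f \<longleftrightarrow>
     smooth_on {0<..} f \<and> (\<forall>r>0. 0 \<le> f r) \<and>
     (\<forall>n\<ge>1. \<forall>r>0. (-1) ^ n * (deriv ^^ n) f r \<le> 0)"

definition admissible_order_function :: "(real \<Rightarrow> real) \<Rightarrow> bool" where
  "admissible_order_function \<phi> \<longleftrightarrow>
     smooth_on {0<..} \<phi> \<and> (\<forall>r>0. 0 < \<phi> r) \<and> \<phi> 1 = 1 \<and>
     bernstein_function (\<lambda>r. inverse (\<phi> (r powr (-1/2)))) \<and>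
     (\<exists>\<delta>1 \<delta>2 a1 a2. 0 < \<delta>1 \<and> \<delta>1 \<le> \<delta>2 \<and> \<delta>2 < 1 \<and> 0 < a1 \<and> a1 \<le> 1 \<and> 1 \<le> a2 \<and>
        (\<forall>lam r. 1 \<le> lam \<and> 0 < r \<longrightarrow>
            a1 * lam powr (2 * \<delta>1) * \<phi> r \<le> \<phi> (lam * r) \<and>
            \<phi> (lam * r) \<le> a2 * lam powr (2 * \<delta>2) * \<phi> r))"

definition partial_deriv :: "('a::euclidean_space \<Rightarrow> real) \<Rightarrow> 'a \<Rightarrow> 'a \<Rightarrow> real" where
  "partial_deriv f i x = deriv (\<lambda>t. f (x + t *\<^sub>R i)) 0"

definition has_partial :: "('a::euclidean_space \<Rightarrow> real) \<Rightarrow> 'a \<Rightarrow> bool" where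
  "has_partial f i \<longleftrightarrow> (\<forall>x. (\<lambda>t. f (x + t *\<^sub>R i)) differentiable (at 0))"

text \<open>D^gamma f, a multi-index being represented as a list of basis vectors.\<close>

fun Dmulti :: "'a::euclidean_space list \<Rightarrow> ('a \<Rightarrow> real) \<Rightarrow> 'a \<Rightarrow> real" where
  "Dmulti [] f = f"
| "Dmulti (i # \<gamma>) f = partial_deriv (Dmulti \<gamma> f) i"

definition multi_indices :: "nat \<Rightarrow> 'a::euclidean_space list set" where
  "multi_indices j = {\<gamma>. set \<gamma> \<subseteq> Basis \<and> length \<gamma> = j}"

definition C0_norm :: "('a \<Rightarrow> real) \<Rightarrow> real" where
  "C0_norm f = (SUP x. \<bar>f x\<bar>)"

definition Dj_norm :: "nat \<Rightarrow> ('a::euclidean_space \<Rightarrow> real) \<Rightarrow> real" where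
  "Dj_norm j f = Max ((\<lambda>\<gamma>. C0_norm (Dmulti \<gamma> f)) ` multi_indices j)"

definition holder_quotients :: "(real \<Rightarrow> real) \<Rightarrow> nat \<Rightarrow> ('a::real_normed_vector \<Rightarrow> real) \<Rightarrow> real set" where
  "holder_quotients g j f =
     {\<bar>f (x + h) - f x\<bar> / (g (norm h) * inverse (norm h ^ j)) | x h. 0 < norm h \<and> norm h \<le> 1}"

definition holder_seminorm :: "(real \<Rightarrow> real) \<Rightarrow> nat \<Rightarrow> ('a::real_normed_vector \<Rightarrow> real) \<Rightarrow> real" where
  "holder_seminorm g j f = Sup (holder_quotients g j f)"

text \<open>The integer k with m_g in (k, k+1].\<close>
definition holder_order :: "(real \<Rightarrow> real) \<Rightarrow> nat" where
  "holder_order g = nat (\<lceil>real_of_ereal (lower_index g)\<rceil> - 1)"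

definition in_C :: "(real \<Rightarrow> real) \<Rightarrow> ('a::euclidean_space \<Rightarrow> real) \<Rightarrow> bool" where
  "in_C g f \<longleftrightarrow>
     (\<forall>\<gamma>. set \<gamma> \<subseteq> Basis \<and> length \<gamma> \<le> holder_order g \<longrightarrow>
        continuous_on UNIV (Dmulti \<gamma> f) \<and> bounded (range (Dmulti \<gamma> f)) \<and>
        (length \<gamma> < holder_order g \<longrightarrow> (\<forall>i\<in>Basis. has_partial (Dmulti \<gamma> f) i))) \<and>
     (\<forall>\<gamma>\<in>multi_indices (holder_order g). bdd_above (holder_quotients g (holder_order g) (Dmulti \<gamma> f)))"

definition C_norm :: "(real \<Rightarrow> real) \<Rightarrow> ('a::euclidean_space \<Rightarrow> real) \<Rightarrow> real" where
  "C_norm g f =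
     (\<Sum>j\<le>holder_order g. Dj_norm j f) +
     Max ((\<lambda>\<gamma>. holder_seminorm g (holder_order g) (Dmulti \<gamma> f)) ` multi_indices (holder_order g))"

definition op_B :: "('a::euclidean_space \<Rightarrow> 'a \<Rightarrow> real) \<Rightarrow> (real \<Rightarrow> real) \<Rightarrow> 'a \<Rightarrow> ('a \<Rightarrow> real) \<Rightarrow> 'a \<Rightarrow> real" where
  "op_B a \<phi> x0 v x =
     (\<integral>h. (v (x + h) - v x) * (a x h - a x0 h) / (norm h ^ DIM('a) * \<phi> (norm h)) \<partial>lborel)"

end

theory Submission
  imports Defs
begin

text \<open>Write \<open>op_B a \<phi> x0 v x = \<integral> (v (x + h) - v x) (a x h - a x0 h) K(h) dh\<close> with
  \<open>K(h) = |h|\<^sup>-\<^sup>d / \<phi>(|h|)\<close>. Its sup norm is controlled by the difference energy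
  \<open>\<integral> |v (x + h) - v x| K(h) dh\<close>, which for \<open>v \<in> C\<^sup>\<phi>\<^sup>\<psi>\<close> is an arbitrarily small multiple
  of \<open>\<parallel>v\<parallel>\<^sub>C\<^sub>\<phi>\<^sub>\<psi>\<close> near \<open>h = 0\<close> (because \<open>\<psi>(0+) = 0\<close>, resp. \<open>M\<^sub>\<phi> < 1\<close> in the
  differentiable case) plus a multiple of \<open>\<parallel>v\<parallel>\<^sub>C\<^sub>0\<close> away from it.
  The increment \<open>op_B v (x + z) - op_B v x\<close> is a second difference of \<open>v\<close> against
  \<open>a (x + z) - a x0\<close> plus a first difference against \<open>a (x + z) - a x = O(\<psi>(|z|))\<close>.
  The second difference energy is \<open>O(\<psi>(|z|) \<parallel>v\<parallel>\<^sub>C\<^sub>\<phi>\<^sub>\<psi>)\<close>; its coefficient is small when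
  \<open>x + z\<close> is near \<open>x0\<close> (continuity of \<open>a\<close>, small \<open>r\<close>), while far from \<open>x0\<close> the support
  condition leaves only the integrable tail of \<open>K\<close>, against increments of \<open>v\<close> that
  are \<open>o(\<psi>(|z|))\<close>. Increments with \<open>|z|\<close> not small follow from the sup bound.\<close>

section \<open>Indices and the order of \<open>C\<^sup>g\<close>\<close>

lemma almost_increasing_below_lower_index:
  assumes "ereal b < lower_index g"
  obtains \<alpha> where "b < \<alpha>" "almost_increasing (\<lambda>r. g r / r powr \<alpha>)"
  using assms unfolding lower_index_def less_Sup_iff by auto

lemma almost_decreasing_above_upper_index:
  assumes "upper_index g < ereal b"
  obtains \<beta> where "\<beta> < b" "almost_decreasing (\<lambda>r. g r / r powr \<beta>)"
  using assms unfolding upper_index_def Inf_less_iff by auto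

text \<open>Comparing the two defining inequalities at \<open>r\<close> and \<open>1\<close> gives
  \<open>c r\<^sup>\<beta> \<le> C r\<^sup>\<alpha>\<close> for all small \<open>r\<close>, impossible when \<open>\<alpha> > \<beta>\<close>.\<close>
lemma almost_increasing_almost_decreasing_exponents_le:
  fixes g :: "real \<Rightarrow> real"
  assumes pos: "\<And>r. 0 < r \<Longrightarrow> r \<le> 1 \<Longrightarrow> 0 < g r"
    and ai: "almost_increasing (\<lambda>r. g r / r powr \<alpha>)"
    and ad: "almost_decreasing (\<lambda>r. g r / r powr \<beta>)"
  shows "\<alpha> \<le> \<beta>"
proof (rule ccontr)
  assume "\<not> \<alpha> \<le> \<beta>"
  hence ab: "0 < \<alpha> - \<beta>" by simp
  obtain c where c: "0 < c" "c \<le> 1" "\<And>r. 0 < r \<Longrightarrow> r \<le> 1 \<Longrightarrow> c * (g r / r powr \<alpha>) \<le> g 1"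
    using ai unfolding almost_increasing_def by force
  obtain C where C: "1 \<le> C" "\<And>r. 0 < r \<Longrightarrow> r \<le> 1 \<Longrightarrow> g 1 \<le> C * (g r / r powr \<beta>)"
    using ad unfolding almost_decreasing_def by force
  define q where "q = c / (2 * C)"
  have q: "0 < q" "q < 1" using c C by (auto simp: q_def field_simps)
  define r where "r = q powr (1 / (\<alpha> - \<beta>))"
  have r: "0 < r" "r < 1" using q ab powr_less_mono2[of "1 / (\<alpha> - \<beta>)" q 1] by (auto simp: r_def)
  have "r powr \<alpha> = r powr \<beta> * r powr (\<alpha> - \<beta>)"
    by (simp flip: powr_add)
  also have "r powr (\<alpha> - \<beta>) = q"
    using q ab by (simp add: r_def powr_powr)
  finally have "r powr \<alpha> = r powr \<beta> * q" .
  moreover have "c * (g r / r powr \<alpha>) \<le> C * (g r / r powr \<beta>)"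
    using c(3)[of r] C(2)[of r] r by linarith
  ultimately have "c / q * g r \<le> C * g r"
    using r by (simp add: field_simps)
  moreover have "0 < g r" using r pos by simp
  ultimately have "c / q \<le> C" by (meson mult_right_le_imp_le)
  thus False using c C by (simp add: q_def)
qed

lemma lower_index_le_upper_index:
  fixes g :: "real \<Rightarrow> real"
  assumes "\<And>r. 0 < r \<Longrightarrow> r \<le> 1 \<Longrightarrow> 0 < g r"
  shows "lower_index g \<le> upper_index g"
  unfolding lower_index_def upper_index_def
  by (rule Sup_le_iff[THEN iffD2], auto intro!: le_Inf_iff[THEN iffD2]
      almost_increasing_almost_decreasing_exponents_le[OF assms])

lemma holder_order_eq:
  fixes k :: nat
  assumes "ereal k < lower_index g" "lower_index g < ereal (k + 1)"
  shows "holder_order g = k"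
proof -
  obtain m where m: "lower_index g = ereal m"
    using assms by (cases "lower_index g") auto
  have "\<lceil>m\<rceil> = int k + 1" using assms by (simp add: m ceiling_eq_iff)
  thus ?thesis by (simp add: holder_order_def m)
qed

section \<open>Integrals of dyadic kernels\<close>

lemma dyadic_bracket:
  fixes t :: real
  assumes "1 \<le> t"
  obtains k :: nat where "2 ^ k \<le> t" "t < 2 ^ (k + 1)"
proof -
  obtain n where "t < 2 ^ n" using real_arch_pow[of 2 t] by auto
  define m where "m = (LEAST n. t < (2::real) ^ n)"
  have m: "t < 2 ^ m" unfolding m_def by (rule LeastI) fact
  with assms have "m \<noteq> 0" by (metis not_less power_0)
  then obtain k where k: "m = Suc k" by (cases m) auto
  have "\<not> t < 2 ^ k" using not_less_Least[of k "\<lambda>n. t < (2::real) ^ n"] k m_def by auto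
  thus ?thesis using that m k by (simp add: not_less)
qed

lemma nn_integral_le_geometric_cball_series:
  fixes f :: "'a::euclidean_space \<Rightarrow> real"
  assumes q: "0 \<le> q" "q < 1" and B: "0 \<le> B"
    and c: "\<And>k. 0 \<le> c k" and R: "\<And>k. 0 \<le> R k"
    and cR: "\<And>k. c k * R k ^ DIM('a) \<le> B * q ^ k"
    and dom: "\<And>h. f h \<le> 0 \<or> (\<exists>k. f h \<le> c k \<and> norm h \<le> R k)"
  shows "(\<integral>\<^sup>+ h. ennreal (f h) \<partial>lborel) \<le> ennreal (unit_ball_vol DIM('a) * B / (1 - q))"
proof -
  let ?V = "unit_ball_vol DIM('a)"
  let ?g = "\<lambda>k h. ennreal (c k) * indicator (cball (0::'a) (R k)) h"
  have "(\<integral>\<^sup>+ h. ennreal (f h) \<partial>lborel) \<le> (\<integral>\<^sup>+ h. (\<Sum>k. ?g k h) \<partial>lborel)"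
  proof (intro nn_integral_mono)
    fix h
    show "ennreal (f h) \<le> (\<Sum>k. ?g k h)"
    proof (cases "f h \<le> 0")
      case False
      then obtain k where k: "f h \<le> c k" "norm h \<le> R k" using dom[of h] by auto
      have "ennreal (f h) \<le> ?g k h" using k by (simp add: ennreal_leI)
      also have "\<dots> = sum (\<lambda>k. ?g k h) {k}" by (simp only: sum.empty sum.insert finite.emptyI empty_iff not_False_eq_True add_0_right)
      also have "\<dots> \<le> (\<Sum>k. ?g k h)" by (rule sum_le_suminf) (auto intro: summableI)
      finally show ?thesis .
    qed (simp add: ennreal_neg)
  qed
  also have "\<dots> = (\<Sum>k. \<integral>\<^sup>+ h. ?g k h \<partial>lborel)"
    by (intro nn_integral_suminf borel_measurable_times_ennreal borel_measurable_indicator) auto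
  also have "\<dots> = (\<Sum>k. ennreal (c k * (?V * R k ^ DIM('a))))"
    using R c by (simp add: nn_integral_cmult_indicator emeasure_cball ennreal_mult)
  also have "\<dots> \<le> (\<Sum>k. ennreal (?V * B * q ^ k))"
  proof (intro suminf_le ennreal_leI)
    fix k
    have "c k * (?V * R k ^ DIM('a)) = ?V * (c k * R k ^ DIM('a))" by simp
    also have "\<dots> \<le> ?V * (B * q ^ k)" using cR[of k] by (rule mult_left_mono) simp
    finally show "c k * (?V * R k ^ DIM('a)) \<le> ?V * B * q ^ k" by (simp add: mult.assoc)
  qed (auto intro: summableI)
  also have "\<dots> = ennreal (?V * B / (1 - q))"
  proof (rule suminf_ennreal_eq)
    show "(\<lambda>k. ?V * B * q ^ k) sums (?V * B / (1 - q))"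
      using sums_mult[OF geometric_sums, of q "?V * B"] q by (simp add: field_simps)
  qed (use q B in auto)
  finally show ?thesis .
qed

definition near_kernel :: "real \<Rightarrow> real \<Rightarrow> 'a::euclidean_space \<Rightarrow> real" where
  "near_kernel \<kappa> s h =
     (if 0 < norm h \<and> norm h \<le> s then inverse (norm h ^ DIM('a)) * (norm h / s) powr \<kappa> else 0)"

definition far_kernel :: "real \<Rightarrow> real \<Rightarrow> 'a::euclidean_space \<Rightarrow> real" where
  "far_kernel \<kappa> s h = (if s < norm h then inverse (norm h ^ DIM('a)) * (s / norm h) powr \<kappa> else 0)"

definition kernel_mass :: "nat \<Rightarrow> real \<Rightarrow> real" where
  "kernel_mass n \<kappa> = unit_ball_vol n * 2 ^ n / (1 - (1/2) powr \<kappa>)"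

lemma near_kernel_nonneg: "0 \<le> near_kernel \<kappa> s h"
  by (simp add: near_kernel_def)

lemma far_kernel_nonneg: "0 \<le> far_kernel \<kappa> s h"
  by (simp add: far_kernel_def)

lemma near_kernel_measurable [measurable]:
  "(near_kernel \<kappa> s :: 'a::euclidean_space \<Rightarrow> real) \<in> borel_measurable lborel"
  unfolding near_kernel_def by measurable

lemma far_kernel_measurable [measurable]:
  "(far_kernel \<kappa> s :: 'a::euclidean_space \<Rightarrow> real) \<in> borel_measurable lborel"
  unfolding far_kernel_def by measurable

lemma kernel_mass_nonneg: "0 < \<kappa> \<Longrightarrow> 0 \<le> kernel_mass n \<kappa>"
  unfolding kernel_mass_def using powr_less_mono2[of \<kappa> "1/2" 1]
  by (intro divide_nonneg_nonneg mult_nonneg_nonneg) auto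

lemma half_power_powr_less_1: "0 < \<kappa> \<Longrightarrow> (1/2::real) powr \<kappa> < 1"
  using powr_less_mono2[of \<kappa> "1/2" 1] by simp

text \<open>On the dyadic shell \<open>s/2\<^sup>k\<^sup>+\<^sup>1 < |h| \<le> s/2\<^sup>k\<close> the kernel is at most
  \<open>(2\<^sup>k\<^sup>+\<^sup>1/s)\<^sup>d 2\<^sup>-\<^sup>k\<^sup>\<kappa>\<close>, and the shells have volume comparable to \<open>(s/2\<^sup>k)\<^sup>d\<close>.\<close>
lemma nn_integral_near_kernel_le:
  assumes "0 < \<kappa>" "0 < s"
  shows "(\<integral>\<^sup>+ h. ennreal (near_kernel \<kappa> s (h::'a::euclidean_space)) \<partial>lborel)
    \<le> ennreal (kernel_mass DIM('a) \<kappa>)"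
  unfolding kernel_mass_def mult.assoc
proof (rule nn_integral_le_geometric_cball_series)
  let ?q = "(1/2::real) powr \<kappa>"
  show "0 \<le> ?q" "?q < 1" using half_power_powr_less_1 assms by auto
  let ?c = "\<lambda>k::nat. (2 ^ (k + 1) / s) ^ DIM('a) * ?q ^ k"
  let ?R = "\<lambda>k::nat. s / 2 ^ k"
  show "0 \<le> ?c k" "0 \<le> ?R k" for k using assms by auto
  show "?c k * ?R k ^ DIM('a) \<le> 2 ^ DIM('a) * ?q ^ k" for k
  proof -
    have "?c k * ?R k ^ DIM('a) = ((2 ^ (k + 1) / s) * (s / 2 ^ k)) ^ DIM('a) * ?q ^ k"
      by (simp only: power_mult_distrib mult_ac)
    also have "(2 ^ (k + 1) / s) * (s / 2 ^ k) = (2::real)" using assms by (simp add: field_simps)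
    finally show ?thesis by (rule eq_refl)
  qed
  show "near_kernel \<kappa> s h \<le> 0 \<or> (\<exists>k. near_kernel \<kappa> s h \<le> ?c k \<and> norm h \<le> ?R k)" for h :: 'a
  proof (cases "0 < norm h \<and> norm h \<le> s")
    case True
    hence nh: "0 < norm h" "norm h \<le> s" by auto
    obtain k :: nat where k: "2 ^ k \<le> s / norm h" "s / norm h < 2 ^ (k + 1)"
      using dyadic_bracket[of "s / norm h"] nh by auto
    have k1: "norm h \<le> s / 2 ^ k" using k(1) nh by (simp add: field_simps)
    have "inverse (norm h) \<le> 2 ^ (k + 1) / s" using k(2) nh assms by (simp add: field_simps)
    hence i1: "inverse (norm h ^ DIM('a)) \<le> (2 ^ (k + 1) / s) ^ DIM('a)"
      using nh by (simp add: power_inverse[symmetric] power_mono)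
    have "norm h / s \<le> (1/2) ^ k" using k1 assms by (simp add: field_simps)
    hence "(norm h / s) powr \<kappa> \<le> ((1/2) ^ k) powr \<kappa>"
      using nh assms by (intro powr_mono2) auto
    also have "((1/2) ^ k) powr \<kappa> = ?q ^ k"
      by (simp add: powr_power powr_realpow[symmetric] powr_powr mult.commute)
    finally have i2: "(norm h / s) powr \<kappa> \<le> ?q ^ k" .
    have "near_kernel \<kappa> s h \<le> ?c k"
      unfolding near_kernel_def using True mult_mono[OF i1 i2] assms by simp
    thus ?thesis using k1 by blast
  qed (auto simp: near_kernel_def)
qed (use assms in auto)

lemma nn_integral_far_kernel_le:
  assumes "0 < \<kappa>" "0 < s"
  shows "(\<integral>\<^sup>+ h. ennreal (far_kernel \<kappa> s (h::'a::euclidean_space)) \<partial>lborel)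
    \<le> ennreal (kernel_mass DIM('a) \<kappa>)"
  unfolding kernel_mass_def mult.assoc
proof (rule nn_integral_le_geometric_cball_series)
  let ?q = "(1/2::real) powr \<kappa>"
  show "0 \<le> ?q" "?q < 1" using half_power_powr_less_1 assms by auto
  let ?c = "\<lambda>k::nat. (1 / (s * 2 ^ k)) ^ DIM('a) * ?q ^ k"
  let ?R = "\<lambda>k::nat. s * 2 ^ (k + 1)"
  show "0 \<le> ?c k" "0 \<le> ?R k" for k using assms by auto
  show "?c k * ?R k ^ DIM('a) \<le> 2 ^ DIM('a) * ?q ^ k" for k
  proof -
    have "?c k * ?R k ^ DIM('a) = ((1 / (s * 2 ^ k)) * (s * 2 ^ (k + 1))) ^ DIM('a) * ?q ^ k"
      by (simp only: power_mult_distrib mult_ac)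
    also have "(1 / (s * 2 ^ k)) * (s * 2 ^ (k + 1)) = (2::real)" using assms by (simp add: field_simps)
    finally show ?thesis by (rule eq_refl)
  qed
  show "far_kernel \<kappa> s h \<le> 0 \<or> (\<exists>k. far_kernel \<kappa> s h \<le> ?c k \<and> norm h \<le> ?R k)" for h :: 'a
  proof (cases "s < norm h")
    case True
    hence nh: "0 < norm h" using assms by linarith
    obtain k :: nat where k: "2 ^ k \<le> norm h / s" "norm h / s < 2 ^ (k + 1)"
      using dyadic_bracket[of "norm h / s"] True assms by auto
    have k1: "s * 2 ^ k \<le> norm h" using k(1) assms by (simp add: field_simps)
    have k2: "norm h \<le> ?R k" using k(2) assms by (simp add: field_simps)
    have "inverse (norm h) \<le> 1 / (s * 2 ^ k)"
      using k1 assms by (simp add: inverse_eq_divide frac_le)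
    hence i1: "inverse (norm h ^ DIM('a)) \<le> (1 / (s * 2 ^ k)) ^ DIM('a)"
      using nh by (simp add: power_inverse[symmetric] power_mono)
    have "s / norm h \<le> (1/2) ^ k" using k1 nh assms by (simp add: field_simps)
    hence "(s / norm h) powr \<kappa> \<le> ((1/2) ^ k) powr \<kappa>"
      using nh assms by (intro powr_mono2) auto
    also have "((1/2) ^ k) powr \<kappa> = ?q ^ k"
      by (simp add: powr_power powr_realpow[symmetric] powr_powr mult.commute)
    finally have i2: "(s / norm h) powr \<kappa> \<le> ?q ^ k" .
    have "far_kernel \<kappa> s h \<le> ?c k"
      unfolding far_kernel_def using True mult_mono[OF i1 i2] assms by simp
    thus ?thesis using k2 by blast
  qed (auto simp: far_kernel_def)
qed (use assms in auto)

lemma nn_integral_le_lincomb: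
  fixes f u w :: "'a \<Rightarrow> real"
  assumes measurable: "u \<in> borel_measurable M" "w \<in> borel_measurable M"
    and nonneg: "\<And>x. 0 \<le> u x" "\<And>x. 0 \<le> w x" "0 \<le> c" "0 \<le> d" "0 \<le> U" "0 \<le> W"
    and f: "\<And>x. f x \<le> c * u x + d * w x"
    and u: "(\<integral>\<^sup>+ x. ennreal (u x) \<partial>M) \<le> ennreal U"
    and w: "(\<integral>\<^sup>+ x. ennreal (w x) \<partial>M) \<le> ennreal W"
  shows "(\<integral>\<^sup>+ x. ennreal (f x) \<partial>M) \<le> ennreal (c * U + d * W)"
proof -
  have "(\<integral>\<^sup>+ x. ennreal (f x) \<partial>M) \<le> (\<integral>\<^sup>+ x. ennreal c * ennreal (u x) + ennreal d * ennreal (w x) \<partial>M)"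
    using nonneg f by (intro nn_integral_mono) (simp add: ennreal_leI flip: ennreal_mult ennreal_plus)
  also have "\<dots> = ennreal c * (\<integral>\<^sup>+ x. ennreal (u x) \<partial>M) + ennreal d * (\<integral>\<^sup>+ x. ennreal (w x) \<partial>M)"
    using measurable by (simp add: nn_integral_add nn_integral_cmult)
  also have "\<dots> \<le> ennreal c * ennreal U + ennreal d * ennreal W"
    by (intro add_mono mult_left_mono u w) auto
  also have "\<dots> = ennreal (c * U + d * W)" using nonneg by (simp add: ennreal_mult ennreal_plus)
  finally show ?thesis .
qed

lemma continuous_shift_borel_measurable:
  fixes v :: "'a::euclidean_space \<Rightarrow> real"
  assumes "continuous_on UNIV v"
  shows "(\<lambda>h. v (y + h)) \<in> borel_measurable lborel"
  unfolding measurable_lborel2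
  by (intro borel_measurable_continuous_onI continuous_on_compose2[OF assms] continuous_intros) auto

lemma integrable_abs_integral_le:
  fixes f :: "'a \<Rightarrow> real"
  assumes f: "f \<in> borel_measurable M" and bound: "(\<integral>\<^sup>+ x. ennreal \<bar>f x\<bar> \<partial>M) \<le> ennreal B" and B: "0 \<le> B"
  shows "integrable M f" "\<bar>integral\<^sup>L M f\<bar> \<le> B"
proof -
  show int: "integrable M f"
    using bound by (intro integrableI_bounded[OF f]) (simp add: order_le_less_trans)
  have "ennreal \<bar>integral\<^sup>L M f\<bar> \<le> ennreal B"
    using integral_norm_bound_ennreal[OF int] bound by simp
  thus "\<bar>integral\<^sup>L M f\<bar> \<le> B" using B by (simp add: ennreal_le_iff)
qed

section \<open>The singular kernel\<close>

text \<open>At \<open>h = 0\<close> this takes the junk value \<open>inverse 0 = 0\<close>.\<close>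
definition singular_kernel :: "(real \<Rightarrow> real) \<Rightarrow> 'a::euclidean_space \<Rightarrow> real" where
  "singular_kernel \<phi> h = inverse (norm h ^ DIM('a) * \<phi> (norm h))"

definition difference_energy :: "(real \<Rightarrow> real) \<Rightarrow> ('a::euclidean_space \<Rightarrow> real) \<Rightarrow> 'a \<Rightarrow> ennreal" where
  "difference_energy \<phi> v x = (\<integral>\<^sup>+ h. ennreal (\<bar>v (x + h) - v x\<bar> * singular_kernel \<phi> h) \<partial>lborel)"

definition second_difference_energy ::
    "(real \<Rightarrow> real) \<Rightarrow> ('a::euclidean_space \<Rightarrow> real) \<Rightarrow> 'a \<Rightarrow> 'a \<Rightarrow> ennreal" where
  "second_difference_energy \<phi> v x z =
     (\<integral>\<^sup>+ h. ennreal (\<bar>v (x + z + h) - v (x + z) - (v (x + h) - v x)\<bar> * singular_kernel \<phi> h) \<partial>lborel)"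

text \<open>The properties of the unit ball of \<open>C\<^sup>\<phi>\<^sup>\<psi>\<close> on which the estimate for \<open>op_B\<close> rests,
  with \<open>V0\<close> the sup norm and \<open>N\<close> the \<open>C\<^sup>\<phi>\<^sup>\<psi>\<close> norm.\<close>
definition controlled_class ::
    "(real \<Rightarrow> real) \<Rightarrow> (real \<Rightarrow> real) \<Rightarrow> (('a::euclidean_space \<Rightarrow> real) \<Rightarrow> bool) \<Rightarrow>
     (('a \<Rightarrow> real) \<Rightarrow> real) \<Rightarrow> (('a \<Rightarrow> real) \<Rightarrow> real) \<Rightarrow> bool" where
  "controlled_class \<phi> \<psi> P V0 N \<longleftrightarrow>
     (\<forall>v. P v \<longrightarrow> continuous_on UNIV v \<and> (\<forall>y. \<bar>v y\<bar> \<le> V0 v) \<and> V0 v \<le> N v) \<and>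
     (\<forall>e>0. \<exists>A\<ge>0. \<forall>v x. P v \<longrightarrow> difference_energy \<phi> v x \<le> ennreal (A * V0 v + e * N v)) \<and>
     (\<exists>Q\<ge>0. \<forall>v x z. P v \<longrightarrow> 0 < norm z \<longrightarrow> norm z \<le> 1 \<longrightarrow>
        second_difference_energy \<phi> v x z \<le> ennreal (Q * \<psi> (norm z) * N v)) \<and>
     (\<forall>e>0. \<exists>\<eta>>0. \<forall>v y z. P v \<longrightarrow> 0 < norm z \<longrightarrow> norm z \<le> \<eta> \<longrightarrow>
        \<bar>v (y + z) - v y\<bar> \<le> e * \<psi> (norm z) * N v)"

lemma op_B_eq_integral_singular_kernel:
  "op_B a \<phi> x0 v x = (\<integral>h. (v (x + h) - v x) * (a x h - a x0 h) * singular_kernel \<phi> h \<partial>lborel)"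
  unfolding op_B_def singular_kernel_def by (simp add: divide_inverse mult.assoc)

lemma singular_kernel_zero [simp]: "singular_kernel \<phi> (0::'a::euclidean_space) = 0"
  by (simp add: singular_kernel_def DIM_positive)

lemma singular_kernel_measurable:
  assumes "continuous_on {0<..} \<phi>" "\<And>r. 0 < r \<Longrightarrow> 0 < \<phi> r"
  shows "(singular_kernel \<phi> :: 'a::euclidean_space \<Rightarrow> real) \<in> borel_measurable lborel"
proof -
  have "continuous_on (- {0::'a}) (\<lambda>h. \<phi> (norm h))"
    by (rule continuous_on_compose2[OF assms(1) continuous_on_norm_id]) auto
  hence "(\<lambda>h::'a. if h \<in> - {0} then inverse (norm h ^ DIM('a) * \<phi> (norm h)) else 0) \<in> borel_measurable borel"
    by (intro borel_measurable_continuous_on_if continuous_intros) (auto simp: assms(2) less_imp_neq[symmetric])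
  moreover have "singular_kernel \<phi> = (\<lambda>h::'a. if h \<in> - {0} then inverse (norm h ^ DIM('a) * \<phi> (norm h)) else 0)"
    by (auto simp: singular_kernel_def fun_eq_iff)
  ultimately show ?thesis unfolding measurable_lborel2 by simp
qed

section \<open>H\<ouml>lder spaces of order 0 and 1\<close>

lemma abs_diff_le_of_partial_derivative_bound:
  fixes u :: "'a::euclidean_space \<Rightarrow> real"
  assumes deriv: "\<And>i y t. i \<in> Basis \<Longrightarrow>
      ((\<lambda>t. u (y + t *\<^sub>R i)) has_real_derivative du i (y + t *\<^sub>R i)) (at t)"
    and bound: "\<And>i w. i \<in> Basis \<Longrightarrow> \<bar>du i w\<bar> \<le> L"
  shows "\<bar>u (x + h) - u x\<bar> \<le> real DIM('a) * L * norm h"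
proof -
  have partial: "\<bar>u (x + (\<Sum>i\<in>S. (h \<bullet> i) *\<^sub>R i)) - u x\<bar> \<le> L * (\<Sum>i\<in>S. \<bar>h \<bullet> i\<bar>)"
    if "S \<subseteq> Basis" for S
    using finite_subset[OF that finite_Basis] that
  proof (induction S rule: finite_induct)
    case (insert i S)
    let ?p = "x + (\<Sum>i\<in>S. (h \<bullet> i) *\<^sub>R i)"
    have "\<bar>u (?p + s *\<^sub>R i) - u (?p + t *\<^sub>R i)\<bar> \<le> L * \<bar>s - t\<bar>" for s t
      using field_differentiable_bound[of UNIV "\<lambda>t. u (?p + t *\<^sub>R i)" "\<lambda>t. du i (?p + t *\<^sub>R i)" L]
        deriv bound insert.prems by auto
    from this[of "h \<bullet> i" 0] insert show ?case by (simp add: algebra_simps add.assoc)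
  qed simp
  obtain b :: 'a where "b \<in> Basis" using nonempty_Basis by blast
  from bound[OF this, of 0] have "0 \<le> L" by linarith
  hence "L * (\<Sum>i\<in>Basis. \<bar>h \<bullet> i\<bar>) \<le> L * (\<Sum>i\<in>(Basis::'a set). norm h)"
    by (intro mult_left_mono sum_mono Basis_le_norm)
  with partial[of Basis] show ?thesis by (simp add: euclidean_representation mult_ac)
qed

lemma abs_second_difference_le_of_partial_derivative_bound:
  fixes v :: "'a::euclidean_space \<Rightarrow> real"
  assumes deriv: "\<And>i y t. i \<in> Basis \<Longrightarrow>
      ((\<lambda>t. v (y + t *\<^sub>R i)) has_real_derivative dv i (y + t *\<^sub>R i)) (at t)"
    and bound: "\<And>i y. i \<in> Basis \<Longrightarrow> \<bar>dv i (y + z) - dv i y\<bar> \<le> L"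
  shows "\<bar>v (x + z + h) - v (x + z) - (v (x + h) - v x)\<bar> \<le> real DIM('a) * L * norm h"
proof -
  have "\<bar>(v (x + h + z) - v (x + h)) - (v (x + z) - v x)\<bar> \<le> real DIM('a) * L * norm h"
  proof (rule abs_diff_le_of_partial_derivative_bound[where u = "\<lambda>w. v (w + z) - v w"])
    fix i y t assume i: "(i::'a) \<in> Basis"
    show "((\<lambda>t. v (y + t *\<^sub>R i + z) - v (y + t *\<^sub>R i)) has_real_derivative
        dv i (y + t *\<^sub>R i + z) - dv i (y + t *\<^sub>R i)) (at t)"
      using DERIV_diff[OF deriv[OF i, of "y + z"] deriv[OF i, of y]] by (simp add: add_ac)
  qed (use bound in auto)
  thus ?thesis by (simp add: add_ac)
qed

lemma multi_indices_0: "multi_indices 0 = {[]::'a::euclidean_space list}"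
  by (auto simp: multi_indices_def)

lemma multi_indices_1: "multi_indices 1 = (\<lambda>i. [i]) ` (Basis::'a::euclidean_space set)"
proof -
  have "\<gamma> \<in> multi_indices 1 \<longleftrightarrow> \<gamma> \<in> (\<lambda>i. [i]) ` (Basis::'a set)" for \<gamma> :: "'a list"
    by (cases \<gamma>) (auto simp: multi_indices_def)
  thus ?thesis by blast
qed

lemma abs_le_C0_norm:
  assumes "bounded (range (f::'a \<Rightarrow> real))"
  shows "\<bar>f y\<bar> \<le> C0_norm f"
proof -
  have "bdd_above (range (\<lambda>x. \<bar>f x\<bar>))"
    using assms unfolding bounded_real by (auto intro: bdd_aboveI)
  thus ?thesis unfolding C0_norm_def by (rule cSUP_upper[OF UNIV_I])
qed

lemma abs_diff_le_holder_seminorm: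
  fixes f :: "'a::real_normed_vector \<Rightarrow> real"
  assumes bdd: "bdd_above (holder_quotients g j f)" and h: "0 < norm h" "norm h \<le> 1" "0 < g (norm h)"
  shows "\<bar>f (x + h) - f x\<bar> \<le> holder_seminorm g j f * (g (norm h) * inverse (norm h ^ j))"
proof -
  have "\<bar>f (x + h) - f x\<bar> / (g (norm h) * inverse (norm h ^ j)) \<le> holder_seminorm g j f"
    unfolding holder_seminorm_def by (rule cSup_upper[OF _ bdd]) (use h in \<open>auto simp: holder_quotients_def\<close>)
  thus ?thesis using h by (simp add: divide_le_eq)
qed

lemma holder_seminorm_nonneg:
  fixes f :: "'a::euclidean_space \<Rightarrow> real"
  assumes bdd: "bdd_above (holder_quotients g j f)" and g: "0 < g 1"
  shows "0 \<le> holder_seminorm g j f"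
proof -
  obtain h :: 'a where h: "norm h = 1" using nonempty_Basis norm_Basis by blast
  have "0 \<le> \<bar>f (0 + h) - f 0\<bar> / (g (norm h) * inverse (norm h ^ j))" using g h by simp
  also have "\<dots> \<le> holder_seminorm g j f"
    unfolding holder_seminorm_def holder_quotients_def
    by (intro cSup_upper[OF _ bdd[unfolded holder_quotients_def]] CollectI exI[of _ 0] exI[of _ h] conjI refl)
      (simp_all add: h)
  finally show ?thesis .
qed

lemma in_C_order0_bounds:
  fixes v :: "'a::euclidean_space \<Rightarrow> real"
  assumes order: "holder_order g = 0" and v: "in_C g v" and g: "\<And>r. 0 < r \<Longrightarrow> r \<le> 1 \<Longrightarrow> 0 < g r"
  shows "continuous_on UNIV v" "\<bar>v y\<bar> \<le> C0_norm v" "C0_norm v \<le> C_norm g v"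
    and "0 < norm h \<Longrightarrow> norm h \<le> 1 \<Longrightarrow> \<bar>v (x + h) - v x\<bar> \<le> C_norm g v * g (norm h)"
proof -
  have "continuous_on UNIV v \<and> bounded (range v)" and bdd: "bdd_above (holder_quotients g 0 v)"
    using v unfolding in_C_def order multi_indices_0 by (auto dest: spec[of _ "[]"])
  hence cont: "continuous_on UNIV v" and bnd: "bounded (range v)" by auto
  have C_norm: "C_norm g v = C0_norm v + holder_seminorm g 0 v"
    unfolding C_norm_def order by (simp add: Dj_norm_def multi_indices_0)
  have semi: "0 \<le> holder_seminorm g 0 v" using holder_seminorm_nonneg[OF bdd] g by simp
  show "continuous_on UNIV v" "\<bar>v y\<bar> \<le> C0_norm v" "C0_norm v \<le> C_norm g v"
    using cont abs_le_C0_norm[OF bnd] C_norm semi by auto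
  assume h: "0 < norm h" "norm h \<le> 1"
  have "\<bar>v (x + h) - v x\<bar> \<le> holder_seminorm g 0 v * g (norm h)"
    using abs_diff_le_holder_seminorm[OF bdd h g[OF h]] by simp
  also have "\<dots> \<le> C_norm g v * g (norm h)"
    using C_norm abs_le_C0_norm[OF bnd, of 0] g[OF h] by (intro mult_right_mono) auto
  finally show "\<bar>v (x + h) - v x\<bar> \<le> C_norm g v * g (norm h)" .
qed

lemma has_real_derivative_partial_deriv:
  fixes v :: "'a::euclidean_space \<Rightarrow> real"
  assumes "has_partial v i"
  shows "((\<lambda>t. v (y + t *\<^sub>R i)) has_real_derivative partial_deriv v i (y + t *\<^sub>R i)) (at t)"
proof -
  let ?w = "y + t *\<^sub>R i"
  have "(\<lambda>s. v (?w + s *\<^sub>R i)) differentiable (at 0)" using assms unfolding has_partial_def by blast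
  hence "((\<lambda>s. v (?w + s *\<^sub>R i)) has_real_derivative partial_deriv v i ?w) (at 0)"
    unfolding partial_deriv_def by (simp add: DERIV_deriv_iff_real_differentiable)
  moreover have "(\<lambda>s. v (y + (s + t) *\<^sub>R i)) = (\<lambda>s. v (?w + s *\<^sub>R i))"
    by (simp add: scaleR_add_left add_ac)
  ultimately have "((\<lambda>t. v (y + t *\<^sub>R i)) has_real_derivative partial_deriv v i ?w) (at (0 + t))"
    unfolding DERIV_shift by simp
  thus ?thesis by simp
qed

lemma in_C_order1_bounds:
  fixes v :: "'a::euclidean_space \<Rightarrow> real"
  assumes order: "holder_order g = 1" and v: "in_C g v" and g: "\<And>r. 0 < r \<Longrightarrow> r \<le> 1 \<Longrightarrow> 0 < g r"
  shows "continuous_on UNIV v" "\<bar>v y\<bar> \<le> C0_norm v" "C0_norm v \<le> C_norm g v"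
    and "i \<in> Basis \<Longrightarrow>
      ((\<lambda>t. v (y + t *\<^sub>R i)) has_real_derivative partial_deriv v i (y + t *\<^sub>R i)) (at t)"
    and "i \<in> Basis \<Longrightarrow> \<bar>partial_deriv v i y\<bar> \<le> C_norm g v"
    and "i \<in> Basis \<Longrightarrow> 0 < norm z \<Longrightarrow> norm z \<le> 1 \<Longrightarrow>
      \<bar>partial_deriv v i (y + z) - partial_deriv v i y\<bar> \<le> C_norm g v * g (norm z) / norm z"
proof -
  have low: "\<And>\<gamma>. set \<gamma> \<subseteq> Basis \<Longrightarrow> length \<gamma> \<le> 1 \<Longrightarrow>
      continuous_on UNIV (Dmulti \<gamma> v) \<and> bounded (range (Dmulti \<gamma> v)) \<and>
      (length \<gamma> < 1 \<longrightarrow> (\<forall>i\<in>Basis. has_partial (Dmulti \<gamma> v) i))"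
    and top: "\<And>i. i \<in> Basis \<Longrightarrow> bdd_above (holder_quotients g 1 (partial_deriv v i))"
    using v unfolding in_C_def order multi_indices_1 by auto
  have cont: "continuous_on UNIV v" and bnd: "bounded (range v)" and partial: "\<And>i. i \<in> Basis \<Longrightarrow> has_partial v i"
    using low[of "[]"] by auto
  have bnd_i: "\<And>i. i \<in> Basis \<Longrightarrow> bounded (range (partial_deriv v i))" using low[of "[_]"] by simp
  let ?D = "Max ((\<lambda>i. C0_norm (partial_deriv v i)) ` Basis)"
  let ?H = "Max ((\<lambda>i. holder_seminorm g 1 (partial_deriv v i)) ` Basis)"
  have C_norm: "C_norm g v = C0_norm v + ?D + ?H"
    unfolding C_norm_def order Dj_norm_def
    by (simp add: image_image multi_indices_0 multi_indices_1[unfolded One_nat_def])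
  have D: "C0_norm (partial_deriv v i) \<le> ?D" and H: "holder_seminorm g 1 (partial_deriv v i) \<le> ?H"
    if "i \<in> Basis" for i using that by (auto intro: Max_ge)
  obtain b :: 'a where b: "b \<in> Basis" using nonempty_Basis by blast
  have nonneg: "0 \<le> C0_norm v" "0 \<le> ?D" "0 \<le> ?H"
    using abs_le_C0_norm[OF bnd, of 0] abs_le_C0_norm[OF bnd_i[OF b], of 0] D[OF b]
      holder_seminorm_nonneg[OF top[OF b]] g[of 1] H[OF b] by linarith+
  show "continuous_on UNIV v" "\<bar>v y\<bar> \<le> C0_norm v" "C0_norm v \<le> C_norm g v"
    using cont abs_le_C0_norm[OF bnd] C_norm nonneg by auto
  assume i: "i \<in> Basis"
  show "((\<lambda>t. v (y + t *\<^sub>R i)) has_real_derivative partial_deriv v i (y + t *\<^sub>R i)) (at t)"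
    by (rule has_real_derivative_partial_deriv[OF partial[OF i]])
  show "\<bar>partial_deriv v i y\<bar> \<le> C_norm g v"
    using abs_le_C0_norm[OF bnd_i[OF i], of y] D[OF i] C_norm nonneg by linarith
  assume z: "0 < norm z" "norm z \<le> 1"
  have "\<bar>partial_deriv v i (y + z) - partial_deriv v i y\<bar> \<le> holder_seminorm g 1 (partial_deriv v i) * (g (norm z) / norm z)"
    using abs_diff_le_holder_seminorm[OF top[OF i] z g[OF z]] by (simp add: divide_inverse)
  also have "\<dots> \<le> C_norm g v * (g (norm z) / norm z)"
    using H[OF i] C_norm nonneg g[OF z] z by (intro mult_right_mono) auto
  finally show "\<bar>partial_deriv v i (y + z) - partial_deriv v i y\<bar> \<le> C_norm g v * g (norm z) / norm z" by simp
qed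

text \<open>Continuity is automatic because \<open>\<psi>(0+) = 0\<close>.\<close>
lemma in_C_order0_of_holder:
  fixes f :: "'a::euclidean_space \<Rightarrow> real"
  assumes order: "holder_order \<psi> = 0" and \<psi>: "(\<psi> \<longlongrightarrow> 0) (at_right 0)" "\<And>r. 0 < r \<Longrightarrow> r \<le> 1 \<Longrightarrow> 0 < \<psi> r"
    and S: "\<And>x. \<bar>f x\<bar> \<le> S"
    and T: "\<And>x z. 0 < norm z \<Longrightarrow> norm z \<le> 1 \<Longrightarrow> \<bar>f (x + z) - f x\<bar> \<le> T * \<psi> (norm z)"
  shows "in_C \<psi> f" "C_norm \<psi> f \<le> S + T"
proof -
  have quotients: "holder_quotients \<psi> 0 f = {\<bar>f (x + h) - f x\<bar> / \<psi> (norm h) | x h. 0 < norm h \<and> norm h \<le> 1}"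
    by (simp add: holder_quotients_def)
  have le_T: "\<forall>q \<in> holder_quotients \<psi> 0 f. q \<le> T"
    unfolding quotients using T \<psi>(2) by (auto simp: divide_le_eq)
  obtain h :: 'a where h: "norm h = 1" using nonempty_Basis norm_Basis by blast
  have "\<bar>f (0 + h) - f 0\<bar> / \<psi> (norm h) \<in> holder_quotients \<psi> 0 f"
    unfolding quotients by (rule CollectI, rule exI[of _ 0], rule exI[of _ h]) (simp add: h)
  hence nonempty: "holder_quotients \<psi> 0 f \<noteq> {}" by blast
  have "filterlim norm (at_right 0) (at (0::'a))"
    unfolding filterlim_at
    by (auto simp: eventually_at_filter intro: tendsto_norm_zero[OF tendsto_ident_at])
  hence T_tendsto: "((\<lambda>z. T * \<psi> (norm z)) \<longlongrightarrow> 0) (at (0::'a))"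
    by (rule tendsto_mult_right_zero[OF filterlim_compose[OF \<psi>(1)]])
  have cont: "continuous_on UNIV f"
  proof (intro continuous_at_imp_continuous_on ballI)
    fix x :: 'a
    have "\<forall>\<^sub>F z in at 0. norm (f (x + z) - f x) \<le> T * \<psi> (norm z)"
      unfolding eventually_at_le by (rule exI[of _ 1]) (simp add: T)
    hence "((\<lambda>z. f (x + z) - f x) \<longlongrightarrow> 0) (at 0)" using T_tendsto by (rule Lim_null_comparison)
    thus "isCont f x" unfolding isCont_iff by (rule LIM_zero_cancel)
  qed
  show "in_C \<psi> f"
    unfolding in_C_def order multi_indices_0 using cont S le_T
    by (auto simp: bounded_real intro: bdd_aboveI)
  have "C_norm \<psi> f = C0_norm f + holder_seminorm \<psi> 0 f"
    unfolding C_norm_def order by (simp add: Dj_norm_def multi_indices_0)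
  also have "\<dots> \<le> S + T"
    unfolding C0_norm_def holder_seminorm_def using S le_T nonempty
    by (intro add_mono cSUP_least cSup_least) auto
  finally show "C_norm \<psi> f \<le> S + T" .
qed

section \<open>Consequences of the index hypotheses\<close>

lemma powr_tendsto_0_at_right_0:
  fixes p :: real
  assumes "0 < p"
  shows "((\<lambda>t. t powr p) \<longlongrightarrow> 0) (at_right 0)"
proof (rule tendsto_zero_powrI)
  show "\<forall>\<^sub>F t in at_right 0. 0 \<le> (t::real)"
    unfolding eventually_at_right_field by (auto intro: exI[of _ 1])
qed (use assms in \<open>auto intro: tendsto_ident_at\<close>)

text \<open>Quantitative form of the hypotheses on \<open>\<psi>\<close> and \<open>\<phi>\<close>: \<open>\<alpha>\<close> is below the lower
  index of \<open>\<psi>\<close>, \<open>\<beta>\<close> and \<open>\<gamma>\<close> are above the upper indices of \<open>\<psi>\<close> and \<open>\<phi>\<close>, and \<open>2\<delta>\<close>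
  is the lower scaling exponent of \<open>\<phi>\<close>.\<close>
locale modulus_order_scaling =
  fixes \<psi> \<phi> :: "real \<Rightarrow> real"
    and \<delta> a1 \<alpha> c\<psi> \<beta> C\<beta> \<gamma> C\<gamma> :: real
  assumes psi_pos: "\<And>r. 0 < r \<Longrightarrow> r \<le> 1 \<Longrightarrow> 0 < \<psi> r"
    and psi_tendsto_0: "(\<psi> \<longlongrightarrow> 0) (at_right 0)"
    and psi_1: "\<psi> 1 = 1"
    and phi_pos: "\<And>r. 0 < r \<Longrightarrow> 0 < \<phi> r"
    and phi_cont: "continuous_on {0<..} \<phi>"
    and phi_1: "\<phi> 1 = 1"
    and delta: "0 < \<delta>" and a1: "0 < a1"
    and phi_lower_scaling: "\<And>l r. 1 \<le> l \<Longrightarrow> 0 < r \<Longrightarrow> a1 * l powr (2 * \<delta>) * \<phi> r \<le> \<phi> (l * r)"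
    and alpha: "0 < \<alpha>" and c\<psi>: "0 < c\<psi>"
    and psi_almost_increasing:
      "\<And>t s. 0 < t \<Longrightarrow> t \<le> s \<Longrightarrow> s \<le> 1 \<Longrightarrow> c\<psi> * (\<psi> t / t powr \<alpha>) \<le> \<psi> s / s powr \<alpha>"
    and beta: "\<beta> < 1" and C\<beta>: "0 < C\<beta>"
    and psi_almost_decreasing:
      "\<And>t s. 0 < t \<Longrightarrow> t \<le> s \<Longrightarrow> s \<le> 1 \<Longrightarrow> \<psi> s / s powr \<beta> \<le> C\<beta> * (\<psi> t / t powr \<beta>)"
    and gamma: "\<gamma> < 1" and C\<gamma>: "0 < C\<gamma>"
    and phi_almost_decreasing:
      "\<And>t s. 0 < t \<Longrightarrow> t \<le> s \<Longrightarrow> s \<le> 1 \<Longrightarrow> \<phi> s / s powr \<gamma> \<le> C\<gamma> * (\<phi> t / t powr \<gamma>)"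
begin

lemma psi_le_scaled:
  assumes "0 < t" "t \<le> s" "s \<le> 1"
  shows "\<psi> t \<le> \<psi> s * (t / s) powr \<alpha> / c\<psi>"
proof -
  have "c\<psi> * (\<psi> t / t powr \<alpha>) \<le> \<psi> s / s powr \<alpha>" using psi_almost_increasing assms by blast
  hence "c\<psi> * \<psi> t * s powr \<alpha> \<le> \<psi> s * t powr \<alpha>" using assms by (simp add: field_simps)
  thus ?thesis using assms c\<psi> by (simp add: powr_divide field_simps)
qed

lemma psi_almost_monotone:
  assumes "0 < t" "t \<le> s" "s \<le> 1"
  shows "c\<psi> * \<psi> t \<le> \<psi> s"
proof -
  have "\<psi> t \<le> \<psi> s * (t / s) powr \<alpha> / c\<psi>" using psi_le_scaled assms by blast
  also have "\<dots> \<le> \<psi> s / c\<psi>"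
    using assms alpha c\<psi> psi_pos[of s] by (auto intro!: divide_right_mono mult_left_le powr_le1)
  finally show ?thesis using c\<psi> by (simp add: field_simps)
qed

lemma le_psi_powr:
  assumes "0 < s" "s \<le> 1"
  shows "s \<le> C\<beta> * \<psi> s * s powr (1 - \<beta>)"
proof -
  have "\<psi> 1 / 1 powr \<beta> \<le> C\<beta> * (\<psi> s / s powr \<beta>)" using psi_almost_decreasing assms by blast
  hence "s powr \<beta> \<le> C\<beta> * \<psi> s" using assms psi_1 by (simp add: field_simps)
  hence "s powr \<beta> * s powr (1 - \<beta>) \<le> C\<beta> * \<psi> s * s powr (1 - \<beta>)" by (rule mult_right_mono) simp
  thus ?thesis using assms by (simp flip: powr_add)
qed

lemma le_psi:
  assumes "0 < s" "s \<le> 1"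
  shows "s \<le> C\<beta> * \<psi> s"
proof -
  have "s powr (1 - \<beta>) \<le> 1" using assms beta by (intro powr_le1) auto
  moreover have "0 \<le> C\<beta> * \<psi> s" using C\<beta> psi_pos[of s] assms by simp
  ultimately show ?thesis using le_psi_powr[OF assms] by (meson mult_left_le order_trans)
qed

lemma phi_le_powr:
  assumes "0 < t" "t \<le> 1"
  shows "\<phi> t \<le> t powr (2 * \<delta>) / a1"
proof -
  have "a1 * (1 / t) powr (2 * \<delta>) * \<phi> t \<le> \<phi> ((1 / t) * t)"
    using phi_lower_scaling[of "1 / t" t] assms by simp
  hence "a1 * \<phi> t / t powr (2 * \<delta>) \<le> 1" using assms phi_1 by (simp add: powr_divide)
  thus ?thesis using assms a1 by (simp add: field_simps)
qed

lemma div_phi_le_powr: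
  assumes "0 < t" "t \<le> 1"
  shows "t / \<phi> t \<le> C\<gamma> * t powr (1 - \<gamma>)"
proof -
  have "\<phi> 1 / 1 powr \<gamma> \<le> C\<gamma> * (\<phi> t / t powr \<gamma>)" using phi_almost_decreasing assms by blast
  hence "t powr \<gamma> \<le> C\<gamma> * \<phi> t" using assms phi_1 by (simp add: field_simps)
  hence "t powr \<gamma> * t powr (1 - \<gamma>) \<le> C\<gamma> * \<phi> t * t powr (1 - \<gamma>)" by (rule mult_right_mono) simp
  thus ?thesis using assms phi_pos[of t] by (simp add: field_simps flip: powr_add)
qed

lemma singular_kernel_nonneg: "0 \<le> singular_kernel \<phi> (h::'a::euclidean_space)"
  using phi_pos[of "norm h"] by (cases "h = 0") (simp_all add: singular_kernel_def[of _ h])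

lemma phi_psi_singular_kernel:
  assumes "(h::'a::euclidean_space) \<noteq> 0"
  shows "\<phi> (norm h) * \<psi> (norm h) * singular_kernel \<phi> h = \<psi> (norm h) * inverse (norm h ^ DIM('a))"
  using phi_pos[of "norm h"] assms by (simp add: singular_kernel_def field_simps)

lemma psi_kernel_le_near_kernel:
  fixes h :: "'a::euclidean_space"
  assumes "0 < norm h" "norm h \<le> s" "s \<le> 1"
  shows "\<psi> (norm h) * inverse (norm h ^ DIM('a)) \<le> \<psi> s / c\<psi> * near_kernel \<alpha> s h"
proof -
  have "\<psi> (norm h) * inverse (norm h ^ DIM('a))
      \<le> \<psi> s * (norm h / s) powr \<alpha> / c\<psi> * inverse (norm h ^ DIM('a))"
    using psi_le_scaled assms by (intro mult_right_mono) auto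
  also have "\<dots> = \<psi> s / c\<psi> * near_kernel \<alpha> s h" using assms by (simp add: near_kernel_def)
  finally show ?thesis .
qed

lemma singular_kernel_le_far_kernel:
  fixes h :: "'a::euclidean_space"
  assumes s: "0 < s" and hs: "s < norm h"
  shows "singular_kernel \<phi> h \<le> far_kernel (2 * \<delta>) s h / (a1 * \<phi> s)"
proof -
  define l where "l = norm h / s"
  have l: "1 \<le> l" "l * s = norm h" using s hs by (simp_all add: l_def)
  have pos: "0 < a1 * l powr (2 * \<delta>) * \<phi> s" using a1 l phi_pos[OF s] by simp
  have "inverse (\<phi> (norm h)) \<le> inverse (a1 * l powr (2 * \<delta>) * \<phi> s)"
    using phi_lower_scaling[OF l(1) s] pos by (intro le_imp_inverse_le) (simp_all add: l(2))
  also have "\<dots> = (s / norm h) powr (2 * \<delta>) / (a1 * \<phi> s)"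
    using s hs by (simp add: l_def powr_divide field_simps)
  finally have "inverse (norm h ^ DIM('a)) * inverse (\<phi> (norm h))
      \<le> inverse (norm h ^ DIM('a)) * ((s / norm h) powr (2 * \<delta>) / (a1 * \<phi> s))"
    by (rule mult_left_mono) simp
  thus ?thesis using hs by (simp add: singular_kernel_def far_kernel_def)
qed

lemma norm_singular_kernel_le_near_kernel:
  fixes h :: "'a::euclidean_space"
  assumes "0 < norm h" "norm h \<le> s" "s \<le> 1"
  shows "norm h * singular_kernel \<phi> h \<le> C\<gamma> * s / \<phi> s * near_kernel (1 - \<gamma>) s h"
proof -
  have s: "0 < s" using assms by linarith
  have "\<phi> s / s powr \<gamma> \<le> C\<gamma> * (\<phi> (norm h) / norm h powr \<gamma>)"
    using phi_almost_decreasing assms by blast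
  hence "inverse (\<phi> (norm h)) \<le> C\<gamma> * (s / norm h) powr \<gamma> / \<phi> s"
    using assms s phi_pos[of s] phi_pos[of "norm h"] C\<gamma> by (simp add: powr_divide field_simps)
  hence "norm h * singular_kernel \<phi> h
      \<le> norm h * inverse (norm h ^ DIM('a)) * (C\<gamma> * (s / norm h) powr \<gamma> / \<phi> s)"
    unfolding singular_kernel_def mult.assoc inverse_mult_distrib
    by (intro mult_left_mono) simp_all
  also have "norm h * (s / norm h) powr \<gamma> = s * (norm h / s) powr (1 - \<gamma>)"
    using assms s by (simp add: powr_divide powr_diff field_simps)
  hence "norm h * inverse (norm h ^ DIM('a)) * (C\<gamma> * (s / norm h) powr \<gamma> / \<phi> s)
      = C\<gamma> * s / \<phi> s * near_kernel (1 - \<gamma>) s h"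
    using assms by (simp add: near_kernel_def field_simps)
  finally show ?thesis .
qed

lemma psi_div_kernel_le_far_kernel:
  fixes h :: "'a::euclidean_space"
  assumes s: "0 < s" and hs: "s < norm h" "norm h \<le> 1"
  shows "\<psi> (norm h) / norm h * inverse (norm h ^ DIM('a)) \<le> C\<beta> * \<psi> s / s * far_kernel (1 - \<beta>) s h"
proof -
  have nh: "0 < norm h" using s hs by linarith
  have "\<psi> (norm h) / norm h powr \<beta> \<le> C\<beta> * (\<psi> s / s powr \<beta>)"
    using psi_almost_decreasing s hs by auto
  hence "\<psi> (norm h) / norm h \<le> C\<beta> * \<psi> s / s * (s / norm h) powr (1 - \<beta>)"
    using s nh by (simp add: powr_divide powr_diff field_simps)
  hence "\<psi> (norm h) / norm h * inverse (norm h ^ DIM('a))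
      \<le> C\<beta> * \<psi> s / s * (s / norm h) powr (1 - \<beta>) * inverse (norm h ^ DIM('a))"
    by (rule mult_right_mono) simp
  thus ?thesis using hs by (simp add: far_kernel_def mult_ac)
qed

lemma difference_energy_le:
  fixes v :: "'a::euclidean_space \<Rightarrow> real"
  assumes V: "\<And>y. \<bar>v y\<bar> \<le> V0" and \<rho>: "0 < \<rho>" and \<kappa>: "0 < \<kappa>" and c: "0 \<le> c"
    and near: "\<And>h. 0 < norm h \<Longrightarrow> norm h \<le> \<rho> \<Longrightarrow>
      \<bar>v (x + h) - v x\<bar> * singular_kernel \<phi> h \<le> c * near_kernel \<kappa> \<rho> h"
  shows "difference_energy \<phi> v x
    \<le> ennreal (c * kernel_mass DIM('a) \<kappa> + 2 * V0 / (a1 * \<phi> \<rho>) * kernel_mass DIM('a) (2 * \<delta>))"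
  unfolding difference_energy_def
proof (rule nn_integral_le_lincomb[where u = "near_kernel \<kappa> \<rho>" and w = "far_kernel (2 * \<delta>) \<rho>"])
  have "0 \<le> V0" using V[of 0] by linarith
  thus "0 \<le> 2 * V0 / (a1 * \<phi> \<rho>)" using a1 phi_pos[OF \<rho>] by simp
  show "\<bar>v (x + h) - v x\<bar> * singular_kernel \<phi> h
      \<le> c * near_kernel \<kappa> \<rho> h + 2 * V0 / (a1 * \<phi> \<rho>) * far_kernel (2 * \<delta>) \<rho> h" for h
  proof -
    consider "h = 0" | "0 < norm h" "norm h \<le> \<rho>" | "\<rho> < norm h" by force
    then show ?thesis
    proof cases
      case 1
      thus ?thesis using c \<open>0 \<le> V0\<close> a1 phi_pos[OF \<rho>]
        by (simp add: near_kernel_nonneg far_kernel_nonneg)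
    next
      case 2
      thus ?thesis using near[OF 2] c \<open>0 \<le> V0\<close> a1 phi_pos[OF \<rho>]
        by (smt (verit) divide_nonneg_nonneg far_kernel_nonneg mult_nonneg_nonneg)
    next
      case 3
      have "\<bar>v (x + h) - v x\<bar> \<le> 2 * V0" using V[of "x + h"] V[of x] by linarith
      hence "\<bar>v (x + h) - v x\<bar> * singular_kernel \<phi> h \<le> 2 * V0 * (far_kernel (2 * \<delta>) \<rho> h / (a1 * \<phi> \<rho>))"
        using singular_kernel_le_far_kernel[OF \<rho> 3] singular_kernel_nonneg \<open>0 \<le> V0\<close>
        by (intro mult_mono) auto
      thus ?thesis using c near_kernel_nonneg[of \<kappa> \<rho> h] by (simp add: mult_nonneg_nonneg add_increasing)
    qed
  qed
  show "(\<integral>\<^sup>+ h. ennreal (near_kernel \<kappa> \<rho> (h::'a)) \<partial>lborel) \<le> ennreal (kernel_mass DIM('a) \<kappa>)"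
    using nn_integral_near_kernel_le \<kappa> \<rho> by blast
  show "(\<integral>\<^sup>+ h. ennreal (far_kernel (2 * \<delta>) \<rho> (h::'a)) \<partial>lborel) \<le> ennreal (kernel_mass DIM('a) (2 * \<delta>))"
    using nn_integral_far_kernel_le[of "2 * \<delta>" \<rho>] \<rho> delta by simp
qed (use c \<kappa> delta kernel_mass_nonneg near_kernel_nonneg far_kernel_nonneg in auto)

text \<open>Splitting at a radius \<open>\<rho>\<close> with \<open>\<omega> \<rho>\<close> small makes the near part as small as
  wanted; the far part only sees the sup norm.\<close>
lemma difference_energy_small:
  fixes P :: "('a::euclidean_space \<Rightarrow> real) \<Rightarrow> bool"
  assumes \<omega>: "(\<omega> \<longlongrightarrow> 0) (at_right 0)" "\<And>\<rho>. 0 < \<rho> \<Longrightarrow> \<rho> \<le> 1 \<Longrightarrow> 0 \<le> \<omega> \<rho>"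
    and \<kappa>: "0 < \<kappa>"
    and V: "\<And>v y. P v \<Longrightarrow> \<bar>v y\<bar> \<le> V0 v" and N: "\<And>v. P v \<Longrightarrow> 0 \<le> N v"
    and near: "\<And>v x \<rho> h. P v \<Longrightarrow> 0 < \<rho> \<Longrightarrow> \<rho> \<le> 1 \<Longrightarrow> 0 < norm h \<Longrightarrow> norm h \<le> \<rho> \<Longrightarrow>
      \<bar>v (x + h) - v x\<bar> * singular_kernel \<phi> h \<le> N v * \<omega> \<rho> * near_kernel \<kappa> \<rho> h"
    and e: "0 < e"
  shows "\<exists>A\<ge>0. \<forall>v x. P v \<longrightarrow> difference_energy \<phi> v x \<le> ennreal (A * V0 v + e * N v)"
proof -
  let ?M = "kernel_mass DIM('a)"
  have M: "0 \<le> ?M \<kappa>" "0 \<le> ?M (2 * \<delta>)" using kernel_mass_nonneg \<kappa> delta by auto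
  have "\<forall>\<^sub>F \<rho> in at_right 0. \<omega> \<rho> < e / (?M \<kappa> + 1)"
    using order_tendstoD(2)[OF \<omega>(1)] e M by simp
  then obtain b where b: "0 < b" "\<And>\<rho>. 0 < \<rho> \<Longrightarrow> \<rho> < b \<Longrightarrow> \<omega> \<rho> < e / (?M \<kappa> + 1)"
    unfolding eventually_at_right_field by auto
  define \<rho> where "\<rho> = min 1 (b / 2)"
  have \<rho>: "0 < \<rho>" "\<rho> \<le> 1" "\<rho> < b" using b by (auto simp: \<rho>_def)
  have "\<omega> \<rho> * ?M \<kappa> \<le> e"
  proof -
    have "\<omega> \<rho> * (?M \<kappa> + 1) < e" using b(2)[OF \<rho>(1,3)] M by (simp add: field_simps)
    thus ?thesis using \<omega>(2)[OF \<rho>(1,2)] by (smt (verit) mult_nonneg_nonneg distrib_left)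
  qed
  show ?thesis
  proof (intro exI[of _ "2 / (a1 * \<phi> \<rho>) * ?M (2 * \<delta>)"] conjI allI impI)
    show "0 \<le> 2 / (a1 * \<phi> \<rho>) * ?M (2 * \<delta>)" using a1 phi_pos[OF \<rho>(1)] M by simp
    fix v x assume v: "P v"
    have "difference_energy \<phi> v x
        \<le> ennreal (N v * \<omega> \<rho> * ?M \<kappa> + 2 * V0 v / (a1 * \<phi> \<rho>) * ?M (2 * \<delta>))"
      using N[OF v] \<omega>(2)[OF \<rho>(1,2)] near[OF v \<rho>(1,2)]
      by (intro difference_energy_le[OF V[OF v] \<rho>(1) \<kappa>]) auto
    also have "\<dots> \<le> ennreal (2 / (a1 * \<phi> \<rho>) * ?M (2 * \<delta>) * V0 v + e * N v)"
      using mult_left_mono[OF \<open>\<omega> \<rho> * ?M \<kappa> \<le> e\<close> N[OF v]]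
      by (intro ennreal_leI) (simp add: mult_ac)
    finally show "difference_energy \<phi> v x \<le> ennreal (2 / (a1 * \<phi> \<rho>) * ?M (2 * \<delta>) * V0 v + e * N v)" .
  qed
qed

lemma increments_small:
  fixes P :: "('a::euclidean_space \<Rightarrow> real) \<Rightarrow> bool"
  assumes \<omega>: "(\<omega> \<longlongrightarrow> 0) (at_right 0)" and N: "\<And>v. P v \<Longrightarrow> 0 \<le> N v"
    and increment: "\<And>v y z. P v \<Longrightarrow> 0 < norm z \<Longrightarrow> norm z \<le> 1 \<Longrightarrow>
      \<bar>v (y + z) - v y\<bar> \<le> N v * \<psi> (norm z) * \<omega> (norm z)"
    and e: "0 < e"
  shows "\<exists>\<eta>>0. \<forall>v y z. P v \<longrightarrow> 0 < norm z \<longrightarrow> norm z \<le> \<eta> \<longrightarrow>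
    \<bar>v (y + z) - v y\<bar> \<le> e * \<psi> (norm z) * N v"
proof -
  obtain b where b: "0 < b" "\<And>t. 0 < t \<Longrightarrow> t < b \<Longrightarrow> \<omega> t < e"
    using order_tendstoD(2)[OF \<omega> e] unfolding eventually_at_right_field by auto
  show ?thesis
  proof (intro exI[of _ "min 1 (b / 2)"] conjI allI impI)
    fix v y and z :: 'a assume v: "P v" and z: "0 < norm z" "norm z \<le> min 1 (b / 2)"
    have "0 \<le> N v * \<psi> (norm z)" using N[OF v] psi_pos[of "norm z"] z by simp
    have "\<bar>v (y + z) - v y\<bar> \<le> N v * \<psi> (norm z) * \<omega> (norm z)"
      using increment[OF v z(1)] z by simp
    also have "\<dots> \<le> N v * \<psi> (norm z) * e"
      using \<open>0 \<le> N v * \<psi> (norm z)\<close> b(2)[of "norm z"] z b(1) by (intro mult_left_mono) auto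
    finally show "\<bar>v (y + z) - v y\<bar> \<le> e * \<psi> (norm z) * N v" by (simp add: mult_ac)
  qed (use b in auto)
qed

lemma second_difference_energy_le_order0:
  fixes v :: "'a::euclidean_space \<Rightarrow> real"
  assumes holder: "\<And>x h. 0 < norm h \<Longrightarrow> norm h \<le> 1 \<Longrightarrow>
      \<bar>v (x + h) - v x\<bar> \<le> N * (\<phi> (norm h) * \<psi> (norm h))"
    and N: "0 \<le> N" and z: "0 < norm z" "norm z \<le> 1"
  shows "second_difference_energy \<phi> v x z
    \<le> ennreal ((2 * N / c\<psi> * kernel_mass DIM('a) \<alpha> + 2 * N / a1 * kernel_mass DIM('a) (2 * \<delta>)) * \<psi> (norm z))"
proof -
  let ?s = "norm z"
  let ?D = "\<lambda>h. \<bar>v (x + z + h) - v (x + z) - (v (x + h) - v x)\<bar>"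
  have pos: "0 < \<phi> ?s" "0 < \<psi> ?s" using phi_pos psi_pos z by auto
  have c: "0 \<le> 2 * N * \<psi> ?s / c\<psi>" "0 \<le> 2 * N * \<psi> ?s / a1" using N pos c\<psi> a1 by auto
  have "second_difference_energy \<phi> v x z \<le> ennreal (2 * N * \<psi> ?s / c\<psi> * kernel_mass DIM('a) \<alpha>
      + 2 * N * \<psi> ?s / a1 * kernel_mass DIM('a) (2 * \<delta>))"
    unfolding second_difference_energy_def
  proof (rule nn_integral_le_lincomb[where u = "near_kernel \<alpha> ?s" and w = "far_kernel (2 * \<delta>) ?s"])
    show "?D h * singular_kernel \<phi> h
        \<le> 2 * N * \<psi> ?s / c\<psi> * near_kernel \<alpha> ?s h + 2 * N * \<psi> ?s / a1 * far_kernel (2 * \<delta>) ?s h" for h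
    proof -
      have near: "0 \<le> 2 * N * \<psi> ?s / c\<psi> * near_kernel \<alpha> ?s h"
        and far: "0 \<le> 2 * N * \<psi> ?s / a1 * far_kernel (2 * \<delta>) ?s h"
        using c by (simp_all only: mult_nonneg_nonneg near_kernel_nonneg far_kernel_nonneg)
      consider "h = 0" | "0 < norm h" "norm h \<le> ?s" | "?s < norm h" by force
      then show ?thesis
      proof cases
        case 2
        have "?D h \<le> 2 * (N * (\<phi> (norm h) * \<psi> (norm h)))"
          using holder[of h "x + z"] holder[of h x] 2 z by (smt (verit))
        hence "?D h * singular_kernel \<phi> h \<le> 2 * (N * (\<phi> (norm h) * \<psi> (norm h))) * singular_kernel \<phi> h"
          using singular_kernel_nonneg[of h] by (rule mult_right_mono)
        also have "\<dots> = 2 * N * (\<phi> (norm h) * \<psi> (norm h) * singular_kernel \<phi> h)" by (simp add: mult_ac)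
        also have "\<dots> = 2 * N * (\<psi> (norm h) * inverse (norm h ^ DIM('a)))"
          using phi_psi_singular_kernel[of h] 2 by simp
        also have "\<dots> \<le> 2 * N * (\<psi> ?s / c\<psi> * near_kernel \<alpha> ?s h)"
          using psi_kernel_le_near_kernel[of h ?s] 2 z N by (intro mult_left_mono) auto
        finally show ?thesis using far by simp
      next
        case 3
        have "?D h \<le> 2 * N * (\<phi> ?s * \<psi> ?s)"
          using holder[of z "x + h"] holder[of z x] z by (simp add: add_ac abs_le_iff)
        hence "?D h * singular_kernel \<phi> h \<le> 2 * N * (\<phi> ?s * \<psi> ?s) * (far_kernel (2 * \<delta>) ?s h / (a1 * \<phi> ?s))"
          using singular_kernel_le_far_kernel[OF z(1) 3] singular_kernel_nonneg N pos by (intro mult_mono) auto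
        also have "\<dots> = 2 * N * \<psi> ?s / a1 * far_kernel (2 * \<delta>) ?s h" using pos a1 by (simp add: field_simps)
        finally show ?thesis using near by simp
      qed (use near far in simp)
    qed
    show "(\<integral>\<^sup>+ h. ennreal (near_kernel \<alpha> ?s (h::'a)) \<partial>lborel) \<le> ennreal (kernel_mass DIM('a) \<alpha>)"
      using nn_integral_near_kernel_le alpha z by blast
    show "(\<integral>\<^sup>+ h. ennreal (far_kernel (2 * \<delta>) ?s (h::'a)) \<partial>lborel) \<le> ennreal (kernel_mass DIM('a) (2 * \<delta>))"
      using nn_integral_far_kernel_le[of "2 * \<delta>" ?s] z delta by simp
  qed (use c alpha delta kernel_mass_nonneg near_kernel_nonneg far_kernel_nonneg in auto)
  also have "\<dots> = ennreal ((2 * N / c\<psi> * kernel_mass DIM('a) \<alpha>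
      + 2 * N / a1 * kernel_mass DIM('a) (2 * \<delta>)) * \<psi> ?s)"
    by (simp add: field_simps)
  finally show ?thesis .
qed

lemma second_difference_kernel_le_order1:
  fixes v :: "'a::euclidean_space \<Rightarrow> real"
  assumes deriv: "\<And>i y t. i \<in> Basis \<Longrightarrow>
      ((\<lambda>t. v (y + t *\<^sub>R i)) has_real_derivative dv i (y + t *\<^sub>R i)) (at t)"
    and bound: "\<And>i y. i \<in> Basis \<Longrightarrow> \<bar>dv i y\<bar> \<le> N"
    and holder: "\<And>i y z. i \<in> Basis \<Longrightarrow> 0 < norm z \<Longrightarrow> norm z \<le> 1 \<Longrightarrow>
      \<bar>dv i (y + z) - dv i y\<bar> \<le> N * (\<phi> (norm z) * \<psi> (norm z)) / norm z"
    and N: "0 \<le> N" and z: "0 < norm z" "norm z \<le> 1"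
  defines "d \<equiv> real DIM('a)"
  shows "\<bar>v (x + z + h) - v (x + z) - (v (x + h) - v x)\<bar> * singular_kernel \<phi> h
    \<le> d * N * C\<gamma> * \<psi> (norm z) * near_kernel (1 - \<gamma>) (norm z) h
      + (d * N * C\<beta> * \<psi> (norm z) * far_kernel (1 - \<beta>) (norm z) h
         + 2 * d * N * C\<beta> * \<psi> (norm z) / a1 * far_kernel (2 * \<delta>) 1 h)"
proof -
  let ?s = "norm z"
  let ?D = "\<bar>v (x + z + h) - v (x + z) - (v (x + h) - v x)\<bar>"
  have pos: "0 < \<phi> ?s" "0 < \<psi> ?s" using phi_pos psi_pos z by auto
  have c: "0 \<le> d * N * C\<gamma> * \<psi> ?s" "0 \<le> d * N * C\<beta> * \<psi> ?s" "0 \<le> 2 * d * N * C\<beta> * \<psi> ?s / a1"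
    using N pos C\<gamma> C\<beta> a1 by (auto simp: d_def)
  have t: "0 \<le> d * N * C\<gamma> * \<psi> ?s * near_kernel (1 - \<gamma>) ?s h"
    "0 \<le> d * N * C\<beta> * \<psi> ?s * far_kernel (1 - \<beta>) ?s h"
    "0 \<le> 2 * d * N * C\<beta> * \<psi> ?s / a1 * far_kernel (2 * \<delta>) 1 h"
    using c by (simp_all only: mult_nonneg_nonneg near_kernel_nonneg far_kernel_nonneg)
  consider "h = 0" | "0 < norm h" "norm h \<le> ?s" | "?s < norm h" "norm h \<le> 1" | "1 < norm h" by force
  then show ?thesis
  proof cases
    case 2
    have "?D \<le> d * (N * (\<phi> ?s * \<psi> ?s) / ?s) * norm h"
      unfolding d_def by (rule abs_second_difference_le_of_partial_derivative_bound[OF deriv holder]) (use z in auto)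
    hence "?D * singular_kernel \<phi> h \<le> d * (N * (\<phi> ?s * \<psi> ?s) / ?s) * norm h * singular_kernel \<phi> h"
      using singular_kernel_nonneg[of h] by (rule mult_right_mono)
    also have "\<dots> = d * (N * (\<phi> ?s * \<psi> ?s) / ?s) * (norm h * singular_kernel \<phi> h)" by simp
    also have "\<dots> \<le> d * (N * (\<phi> ?s * \<psi> ?s) / ?s) * (C\<gamma> * ?s / \<phi> ?s * near_kernel (1 - \<gamma>) ?s h)"
      using norm_singular_kernel_le_near_kernel[of h ?s] 2 z N pos by (intro mult_left_mono) (auto simp: d_def)
    also have "\<dots> = d * N * C\<gamma> * \<psi> ?s * near_kernel (1 - \<gamma>) ?s h" using pos z by (simp add: field_simps)
    finally show ?thesis using t by simp
  next
    case 3
    have h: "0 < norm h" using 3 z by linarith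
    have "\<bar>v (x + h + z) - v (x + h) - (v (x + z) - v x)\<bar> \<le> d * (N * (\<phi> (norm h) * \<psi> (norm h)) / norm h) * ?s"
      unfolding d_def by (rule abs_second_difference_le_of_partial_derivative_bound[OF deriv holder]) (use h 3 in auto)
    hence "?D * singular_kernel \<phi> h \<le> d * (N * (\<phi> (norm h) * \<psi> (norm h)) / norm h) * ?s * singular_kernel \<phi> h"
      using singular_kernel_nonneg[of h] by (intro mult_right_mono) (simp_all add: add_ac abs_minus_commute)
    also have "\<dots> = d * N * ?s * (\<psi> (norm h) / norm h * inverse (norm h ^ DIM('a)))"
      using phi_psi_singular_kernel[of h] h by (simp add: field_simps)
    also have "\<dots> \<le> d * N * ?s * (C\<beta> * \<psi> ?s / ?s * far_kernel (1 - \<beta>) ?s h)"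
      using psi_div_kernel_le_far_kernel[of ?s h] 3 z N by (intro mult_left_mono) (auto simp: d_def)
    also have "\<dots> = d * N * C\<beta> * \<psi> ?s * far_kernel (1 - \<beta>) ?s h" using z by (simp add: field_simps)
    finally show ?thesis using t by simp
  next
    case 4
    have "\<bar>v (x + h + z) - v (x + h)\<bar> \<le> d * N * ?s" "\<bar>v (x + z) - v x\<bar> \<le> d * N * ?s"
      unfolding d_def by (auto intro: abs_diff_le_of_partial_derivative_bound[OF deriv bound])
    hence "?D \<le> 2 * d * N * ?s" by (simp add: add_ac abs_le_iff)
    also have "\<dots> \<le> 2 * d * N * (C\<beta> * \<psi> ?s)" using le_psi[OF z] N by (intro mult_left_mono) (auto simp: d_def)
    finally have "?D * singular_kernel \<phi> h \<le> 2 * d * N * (C\<beta> * \<psi> ?s) * (far_kernel (2 * \<delta>) 1 h / (a1 * \<phi> 1))"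
      using singular_kernel_le_far_kernel[of 1 h] 4 singular_kernel_nonneg[of h] N pos C\<beta>
      by (intro mult_mono) (auto simp: d_def)
    thus ?thesis using t phi_1 by simp
  qed (use t in simp)
qed

lemma second_difference_energy_le_order1:
  fixes v :: "'a::euclidean_space \<Rightarrow> real"
  assumes deriv: "\<And>i y t. i \<in> Basis \<Longrightarrow>
      ((\<lambda>t. v (y + t *\<^sub>R i)) has_real_derivative dv i (y + t *\<^sub>R i)) (at t)"
    and bound: "\<And>i y. i \<in> Basis \<Longrightarrow> \<bar>dv i y\<bar> \<le> N"
    and holder: "\<And>i y z. i \<in> Basis \<Longrightarrow> 0 < norm z \<Longrightarrow> norm z \<le> 1 \<Longrightarrow>
      \<bar>dv i (y + z) - dv i y\<bar> \<le> N * (\<phi> (norm z) * \<psi> (norm z)) / norm z"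
    and N: "0 \<le> N" and z: "0 < norm z" "norm z \<le> 1"
  defines "d \<equiv> real DIM('a)" and "M \<equiv> kernel_mass DIM('a)"
  shows "second_difference_energy \<phi> v x z
    \<le> ennreal ((d * C\<gamma> * M (1 - \<gamma>) + d * C\<beta> * M (1 - \<beta>) + 2 * d * C\<beta> / a1 * M (2 * \<delta>)) * N * \<psi> (norm z))"
proof -
  let ?s = "norm z"
  have pos: "0 < \<psi> ?s" using psi_pos z by auto
  have M: "0 \<le> M (1 - \<gamma>)" "0 \<le> M (1 - \<beta>)" "0 \<le> M (2 * \<delta>)"
    using kernel_mass_nonneg gamma beta delta by (auto simp: M_def)
  have c: "0 \<le> d * N * C\<gamma> * \<psi> ?s" "0 \<le> d * N * C\<beta> * \<psi> ?s" "0 \<le> 2 * d * N * C\<beta> * \<psi> ?s / a1"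
    using N pos C\<gamma> C\<beta> a1 by (auto simp: d_def)
  have near: "(\<integral>\<^sup>+ h. ennreal (near_kernel (1 - \<gamma>) ?s (h::'a)) \<partial>lborel) \<le> ennreal (M (1 - \<gamma>))"
    using nn_integral_near_kernel_le[of "1 - \<gamma>" ?s] gamma z by (simp add: M_def)
  have far: "(\<integral>\<^sup>+ h. ennreal (d * N * C\<beta> * \<psi> ?s * far_kernel (1 - \<beta>) ?s h
      + 2 * d * N * C\<beta> * \<psi> ?s / a1 * far_kernel (2 * \<delta>) 1 (h::'a)) \<partial>lborel)
    \<le> ennreal (d * N * C\<beta> * \<psi> ?s * M (1 - \<beta>) + 2 * d * N * C\<beta> * \<psi> ?s / a1 * M (2 * \<delta>))"
    using c M beta delta z nn_integral_far_kernel_le[of "1 - \<beta>" ?s] nn_integral_far_kernel_le[of "2 * \<delta>" 1]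
    by (intro nn_integral_le_lincomb) (auto simp: M_def far_kernel_nonneg)
  have "second_difference_energy \<phi> v x z \<le> ennreal (d * N * C\<gamma> * \<psi> ?s * M (1 - \<gamma>)
      + 1 * (d * N * C\<beta> * \<psi> ?s * M (1 - \<beta>) + 2 * d * N * C\<beta> * \<psi> ?s / a1 * M (2 * \<delta>)))"
    unfolding second_difference_energy_def
  proof (rule nn_integral_le_lincomb[OF _ _ _ _ _ _ _ _ _ near far])
    show "0 \<le> d * N * C\<beta> * \<psi> ?s * far_kernel (1 - \<beta>) ?s h + 2 * d * N * C\<beta> * \<psi> ?s / a1 * far_kernel (2 * \<delta>) 1 h"
      for h :: 'a
      by (rule add_nonneg_nonneg[OF mult_nonneg_nonneg[OF c(2) far_kernel_nonneg]
          mult_nonneg_nonneg[OF c(3) far_kernel_nonneg]])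
    show "0 \<le> d * N * C\<beta> * \<psi> ?s * M (1 - \<beta>) + 2 * d * N * C\<beta> * \<psi> ?s / a1 * M (2 * \<delta>)"
      by (rule add_nonneg_nonneg[OF mult_nonneg_nonneg[OF c(2) M(2)] mult_nonneg_nonneg[OF c(3) M(3)]])
  qed (use second_difference_kernel_le_order1[OF deriv bound holder N z, folded d_def] c M
      in \<open>auto simp: near_kernel_nonneg\<close>)
  also have "\<dots> = ennreal ((d * C\<gamma> * M (1 - \<gamma>) + d * C\<beta> * M (1 - \<beta>) + 2 * d * C\<beta> / a1 * M (2 * \<delta>)) * N * \<psi> ?s)"
    by (simp add: field_simps)
  finally show ?thesis .
qed

lemma phi_tendsto_0: "(\<phi> \<longlongrightarrow> 0) (at_right 0)"
proof (rule tendsto_sandwich)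
  show "\<forall>\<^sub>F t in at_right 0. 0 \<le> \<phi> t"
    unfolding eventually_at_right_field using phi_pos by (auto intro!: exI[of _ 1] less_imp_le)
  show "\<forall>\<^sub>F t in at_right 0. \<phi> t \<le> t powr (2 * \<delta>) / a1"
    unfolding eventually_at_right_field using phi_le_powr by (auto intro!: exI[of _ 1])
  show "((\<lambda>t. t powr (2 * \<delta>) / a1) \<longlongrightarrow> 0) (at_right 0)"
    using tendsto_divide[OF powr_tendsto_0_at_right_0 tendsto_const, of "2 * \<delta>" a1] delta a1 by simp
qed simp

lemma div_phi_tendsto_0: "((\<lambda>t. t / \<phi> t) \<longlongrightarrow> 0) (at_right 0)"
proof (rule tendsto_sandwich)
  show "\<forall>\<^sub>F t in at_right 0. 0 \<le> t / \<phi> t"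
    unfolding eventually_at_right_field using phi_pos by (intro exI[of _ 1]) (simp add: less_imp_le)
  show "\<forall>\<^sub>F t in at_right 0. t / \<phi> t \<le> C\<gamma> * t powr (1 - \<gamma>)"
    unfolding eventually_at_right_field using div_phi_le_powr by (intro exI[of _ 1]) auto
  show "((\<lambda>t. C\<gamma> * t powr (1 - \<gamma>)) \<longlongrightarrow> 0) (at_right 0)"
    using powr_tendsto_0_at_right_0[of "1 - \<gamma>"] gamma by (auto intro: tendsto_mult_right_zero)
qed simp

lemma controlled_class_order0:
  fixes P :: "('a::euclidean_space \<Rightarrow> real) \<Rightarrow> bool"
  assumes cont: "\<And>v. P v \<Longrightarrow> continuous_on UNIV v"
    and sup: "\<And>v y. P v \<Longrightarrow> \<bar>v y\<bar> \<le> V0 v" and V0_le: "\<And>v. P v \<Longrightarrow> V0 v \<le> N v"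
    and holder: "\<And>v x h. P v \<Longrightarrow> 0 < norm h \<Longrightarrow> norm h \<le> 1 \<Longrightarrow>
      \<bar>v (x + h) - v x\<bar> \<le> N v * (\<phi> (norm h) * \<psi> (norm h))"
  shows "controlled_class \<phi> \<psi> P V0 N"
proof -
  let ?M = "kernel_mass DIM('a)"
  have N: "0 \<le> N v" if "P v" for v using sup[OF that, of 0] V0_le[OF that] by linarith
  have "\<exists>A\<ge>0. \<forall>v x. P v \<longrightarrow> difference_energy \<phi> v x \<le> ennreal (A * V0 v + e * N v)" if "0 < e" for e
  proof (rule difference_energy_small[OF _ _ alpha sup N _ that])
    show "((\<lambda>\<rho>. \<psi> \<rho> / c\<psi>) \<longlongrightarrow> 0) (at_right 0)"
      using tendsto_divide[OF psi_tendsto_0 tendsto_const, of c\<psi>] c\<psi> by simp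
    show "0 \<le> \<psi> \<rho> / c\<psi>" if "0 < \<rho>" "\<rho> \<le> 1" for \<rho> using psi_pos[OF that] c\<psi> by simp
    fix v x \<rho> and h :: 'a assume v: "P v" and \<rho>: "0 < \<rho>" "\<rho> \<le> 1" and h: "0 < norm h" "norm h \<le> \<rho>"
    have "\<bar>v (x + h) - v x\<bar> * singular_kernel \<phi> h \<le> N v * (\<phi> (norm h) * \<psi> (norm h)) * singular_kernel \<phi> h"
      using holder[OF v h(1)] h \<rho> singular_kernel_nonneg[of h] by (intro mult_right_mono) auto
    also have "\<dots> = N v * (\<psi> (norm h) * inverse (norm h ^ DIM('a)))"
      using phi_psi_singular_kernel[of h] h by (simp add: mult.assoc)
    also have "\<dots> \<le> N v * (\<psi> \<rho> / c\<psi> * near_kernel \<alpha> \<rho> h)"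
      using psi_kernel_le_near_kernel[OF h \<rho>(2)] N[OF v] by (rule mult_left_mono)
    finally show "\<bar>v (x + h) - v x\<bar> * singular_kernel \<phi> h \<le> N v * (\<psi> \<rho> / c\<psi>) * near_kernel \<alpha> \<rho> h"
      by (simp add: mult.assoc)
  qed
  moreover have "\<exists>Q\<ge>0. \<forall>v x z. P v \<longrightarrow> 0 < norm z \<longrightarrow> norm z \<le> 1 \<longrightarrow>
      second_difference_energy \<phi> v x z \<le> ennreal (Q * \<psi> (norm z) * N v)"
  proof (intro exI[of _ "2 / c\<psi> * ?M \<alpha> + 2 / a1 * ?M (2 * \<delta>)"] conjI allI impI)
    show "0 \<le> 2 / c\<psi> * ?M \<alpha> + 2 / a1 * ?M (2 * \<delta>)"
      using kernel_mass_nonneg alpha delta c\<psi> a1 by (simp add: add_nonneg_nonneg)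
    fix v x and z :: 'a assume v: "P v" and z: "0 < norm z" "norm z \<le> 1"
    have "second_difference_energy \<phi> v x z
        \<le> ennreal ((2 * N v / c\<psi> * ?M \<alpha> + 2 * N v / a1 * ?M (2 * \<delta>)) * \<psi> (norm z))"
      by (rule second_difference_energy_le_order0[OF holder[OF v] N[OF v] z])
    also have "(2 * N v / c\<psi> * ?M \<alpha> + 2 * N v / a1 * ?M (2 * \<delta>)) * \<psi> (norm z)
        = (2 / c\<psi> * ?M \<alpha> + 2 / a1 * ?M (2 * \<delta>)) * \<psi> (norm z) * N v"
      by (simp add: field_simps)
    finally show "second_difference_energy \<phi> v x z
        \<le> ennreal ((2 / c\<psi> * ?M \<alpha> + 2 / a1 * ?M (2 * \<delta>)) * \<psi> (norm z) * N v)" .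
  qed
  moreover have "\<exists>\<eta>>0. \<forall>v y z. P v \<longrightarrow> 0 < norm z \<longrightarrow> norm z \<le> \<eta> \<longrightarrow>
      \<bar>v (y + z) - v y\<bar> \<le> e * \<psi> (norm z) * N v" if "0 < e" for e
  proof (rule increments_small[OF phi_tendsto_0 N _ that])
    show "\<bar>v (y + z) - v y\<bar> \<le> N v * \<psi> (norm z) * \<phi> (norm z)"
      if "P v" "0 < norm z" "norm z \<le> 1" for v y and z :: 'a
      using holder[OF that] by (simp add: mult_ac)
  qed
  ultimately show ?thesis unfolding controlled_class_def using cont sup V0_le by blast
qed

lemma controlled_class_order1:
  fixes P :: "('a::euclidean_space \<Rightarrow> real) \<Rightarrow> bool"
  assumes cont: "\<And>v. P v \<Longrightarrow> continuous_on UNIV v"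
    and sup: "\<And>v y. P v \<Longrightarrow> \<bar>v y\<bar> \<le> V0 v" and V0_le: "\<And>v. P v \<Longrightarrow> V0 v \<le> N v"
    and deriv: "\<And>v i y t. P v \<Longrightarrow> i \<in> Basis \<Longrightarrow>
      ((\<lambda>t. v (y + t *\<^sub>R i)) has_real_derivative dv v i (y + t *\<^sub>R i)) (at t)"
    and bound: "\<And>v i y. P v \<Longrightarrow> i \<in> Basis \<Longrightarrow> \<bar>dv v i y\<bar> \<le> N v"
    and holder: "\<And>v i y z. P v \<Longrightarrow> i \<in> Basis \<Longrightarrow> 0 < norm z \<Longrightarrow> norm z \<le> 1 \<Longrightarrow>
      \<bar>dv v i (y + z) - dv v i y\<bar> \<le> N v * (\<phi> (norm z) * \<psi> (norm z)) / norm z"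
  shows "controlled_class \<phi> \<psi> P V0 N"
proof -
  let ?M = "kernel_mass DIM('a)" and ?d = "real DIM('a)"
  have N: "0 \<le> N v" if "P v" for v using sup[OF that, of 0] V0_le[OF that] by linarith
  have lipschitz: "\<bar>v (y + h) - v y\<bar> \<le> ?d * N v * norm h" if "P v" for v y h
    by (rule abs_diff_le_of_partial_derivative_bound[OF deriv[OF that] bound[OF that]])
  have "\<exists>A\<ge>0. \<forall>v x. P v \<longrightarrow> difference_energy \<phi> v x \<le> ennreal (A * V0 v + e * N v)" if "0 < e" for e
  proof (rule difference_energy_small[where \<omega> = "\<lambda>\<rho>. ?d * C\<gamma> * \<rho> / \<phi> \<rho>", OF _ _ _ sup N _ that])
    show "((\<lambda>\<rho>. ?d * C\<gamma> * \<rho> / \<phi> \<rho>) \<longlongrightarrow> 0) (at_right 0)"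
      using tendsto_mult_right_zero[OF div_phi_tendsto_0, of "?d * C\<gamma>"] by simp
    show "0 \<le> ?d * C\<gamma> * \<rho> / \<phi> \<rho>" if "0 < \<rho>" for \<rho> using phi_pos[OF that] that C\<gamma> by simp
    show "0 < 1 - \<gamma>" using gamma by simp
    fix v x \<rho> and h :: 'a assume v: "P v" and \<rho>: "0 < \<rho>" "\<rho> \<le> 1" and h: "0 < norm h" "norm h \<le> \<rho>"
    have "\<bar>v (x + h) - v x\<bar> * singular_kernel \<phi> h \<le> ?d * N v * (norm h * singular_kernel \<phi> h)"
      using mult_right_mono[OF lipschitz[OF v] singular_kernel_nonneg] by (simp add: mult.assoc)
    also have "\<dots> \<le> ?d * N v * (C\<gamma> * \<rho> / \<phi> \<rho> * near_kernel (1 - \<gamma>) \<rho> h)"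
      using norm_singular_kernel_le_near_kernel[OF h \<rho>(2)] N[OF v] by (intro mult_left_mono) auto
    finally show "\<bar>v (x + h) - v x\<bar> * singular_kernel \<phi> h
        \<le> N v * (?d * C\<gamma> * \<rho> / \<phi> \<rho>) * near_kernel (1 - \<gamma>) \<rho> h"
      by (simp add: mult_ac)
  qed
  moreover have "\<exists>Q\<ge>0. \<forall>v x z. P v \<longrightarrow> 0 < norm z \<longrightarrow> norm z \<le> 1 \<longrightarrow>
      second_difference_energy \<phi> v x z \<le> ennreal (Q * \<psi> (norm z) * N v)"
  proof (intro exI[of _ "?d * C\<gamma> * ?M (1 - \<gamma>) + ?d * C\<beta> * ?M (1 - \<beta>) + 2 * ?d * C\<beta> / a1 * ?M (2 * \<delta>)"]
      conjI allI impI)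
    show "0 \<le> ?d * C\<gamma> * ?M (1 - \<gamma>) + ?d * C\<beta> * ?M (1 - \<beta>) + 2 * ?d * C\<beta> / a1 * ?M (2 * \<delta>)"
      using kernel_mass_nonneg gamma beta delta C\<gamma> C\<beta> a1 by (simp add: add_nonneg_nonneg)
    fix v x and z :: 'a assume v: "P v" and z: "0 < norm z" "norm z \<le> 1"
    show "second_difference_energy \<phi> v x z \<le> ennreal ((?d * C\<gamma> * ?M (1 - \<gamma>) + ?d * C\<beta> * ?M (1 - \<beta>)
        + 2 * ?d * C\<beta> / a1 * ?M (2 * \<delta>)) * \<psi> (norm z) * N v)"
      using second_difference_energy_le_order1[OF deriv[OF v] bound[OF v] holder[OF v] N[OF v] z]
      by (simp add: mult_ac)
  qed
  moreover have "\<exists>\<eta>>0. \<forall>v y z. P v \<longrightarrow> 0 < norm z \<longrightarrow> norm z \<le> \<eta> \<longrightarrow>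
      \<bar>v (y + z) - v y\<bar> \<le> e * \<psi> (norm z) * N v" if "0 < e" for e
  proof (rule increments_small[where \<omega> = "\<lambda>t. ?d * C\<beta> * t powr (1 - \<beta>)", OF _ N _ that])
    show "((\<lambda>t. ?d * C\<beta> * t powr (1 - \<beta>)) \<longlongrightarrow> 0) (at_right 0)"
      using powr_tendsto_0_at_right_0[of "1 - \<beta>"] beta by (auto intro: tendsto_mult_right_zero)
    fix v y and z :: 'a assume v: "P v" and z: "0 < norm z" "norm z \<le> 1"
    have "\<bar>v (y + z) - v y\<bar> \<le> ?d * N v * norm z" by (rule lipschitz[OF v])
    also have "\<dots> \<le> ?d * N v * (C\<beta> * \<psi> (norm z) * norm z powr (1 - \<beta>))"
      using le_psi_powr[OF z] N[OF v] by (intro mult_left_mono) auto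
    finally show "\<bar>v (y + z) - v y\<bar> \<le> N v * \<psi> (norm z) * (?d * C\<beta> * norm z powr (1 - \<beta>))"
      by (simp add: mult_ac)
  qed
  ultimately show ?thesis unfolding controlled_class_def using cont sup V0_le by blast
qed

lemma controlled_class_in_C:
  assumes "0 < lower_index (\<lambda>r. \<phi> r * \<psi> r)" "upper_index (\<lambda>r. \<phi> r * \<psi> r) < 2"
    and "\<not> (lower_index (\<lambda>r. \<phi> r * \<psi> r) \<le> 1 \<and> 1 \<le> upper_index (\<lambda>r. \<phi> r * \<psi> r))"
  shows "controlled_class \<phi> \<psi> (in_C (\<lambda>r. \<phi> r * \<psi> r)) C0_norm
    (C_norm (\<lambda>r. \<phi> r * \<psi> r) :: ('a::euclidean_space \<Rightarrow> real) \<Rightarrow> real)"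
proof -
  let ?g = "\<lambda>r. \<phi> r * \<psi> r"
  have g_pos: "\<And>r. 0 < r \<Longrightarrow> r \<le> 1 \<Longrightarrow> 0 < ?g r" using phi_pos psi_pos by simp
  note indices_le = lower_index_le_upper_index[of ?g, OF g_pos]
  show ?thesis
  proof (cases "1 < lower_index ?g")
    case True
    with assms(2) indices_le have "holder_order ?g = 1"
      using holder_order_eq[of 1 ?g] by (simp add: one_ereal_def)
    from in_C_order1_bounds[OF this _ g_pos] show ?thesis
      by (intro controlled_class_order1[where dv = partial_deriv]) auto
  next
    case False
    with assms(3) indices_le have "lower_index ?g < 1" by (meson not_less order.strict_trans1)
    hence "holder_order ?g = 0"
      using holder_order_eq[of 0 ?g] assms(1) by (simp add: zero_ereal_def one_ereal_def)
    from in_C_order0_bounds[OF this _ g_pos] show ?thesis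
      by (intro controlled_class_order0) auto
  qed
qed

lemma nn_integral_tail_singular_kernel_le:
  assumes r: "0 < r"
  shows "(\<integral>\<^sup>+ h. ennreal (indicator {h::'a::euclidean_space. r < norm h} h * singular_kernel \<phi> h) \<partial>lborel)
    \<le> ennreal (1 / (a1 * \<phi> r) * kernel_mass DIM('a) (2 * \<delta>))"
proof -
  have "(\<integral>\<^sup>+ h. ennreal (indicator {h::'a. r < norm h} h * singular_kernel \<phi> h) \<partial>lborel)
      \<le> (\<integral>\<^sup>+ h. ennreal (1 / (a1 * \<phi> r)) * ennreal (far_kernel (2 * \<delta>) r (h::'a)) \<partial>lborel)"
  proof (intro nn_integral_mono)
    fix h :: 'a
    have "indicator {h::'a. r < norm h} h * singular_kernel \<phi> h \<le> 1 / (a1 * \<phi> r) * far_kernel (2 * \<delta>) r h"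
      using singular_kernel_le_far_kernel[OF r, of h] a1 phi_pos[OF r] far_kernel_nonneg[of "2 * \<delta>" r h]
      by (simp add: indicator_def)
    thus "ennreal (indicator {h::'a. r < norm h} h * singular_kernel \<phi> h)
        \<le> ennreal (1 / (a1 * \<phi> r)) * ennreal (far_kernel (2 * \<delta>) r h)"
      using a1 phi_pos[OF r] far_kernel_nonneg by (subst ennreal_mult[symmetric]) (auto intro: ennreal_leI)
  qed
  also have "\<dots> \<le> ennreal (1 / (a1 * \<phi> r)) * ennreal (kernel_mass DIM('a) (2 * \<delta>))"
    using nn_integral_far_kernel_le[of "2 * \<delta>" r, where 'a='a] delta r
    by (simp add: nn_integral_cmult mult_left_mono)
  also have "\<dots> = ennreal (1 / (a1 * \<phi> r) * kernel_mass DIM('a) (2 * \<delta>))"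
    using a1 phi_pos[OF r] kernel_mass_nonneg[of "2 * \<delta>"] delta by (simp flip: ennreal_mult)
  finally show ?thesis .
qed

end

lemma modulus_order_scaling_from_indices:
  assumes \<psi>: "admissible_modulus \<psi>" and \<phi>: "admissible_order_function \<phi>"
    and indices: "0 < lower_index \<psi>" "upper_index \<psi> < 1" "upper_index \<phi> < 1"
  obtains \<delta> a1 \<alpha> c\<psi> \<beta> C\<beta> \<gamma> C\<gamma> where "modulus_order_scaling \<psi> \<phi> \<delta> a1 \<alpha> c\<psi> \<beta> C\<beta> \<gamma> C\<gamma>"
proof -
  obtain \<delta> a1 where \<delta>: "0 < \<delta>" "0 < a1"
    "\<And>l r. 1 \<le> l \<Longrightarrow> 0 < r \<Longrightarrow> a1 * l powr (2 * \<delta>) * \<phi> r \<le> \<phi> (l * r)"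
    using \<phi> unfolding admissible_order_function_def by fastforce
  have "continuous_on {0<..} \<phi>"
    using \<phi> unfolding admissible_order_function_def smooth_on_def
    by (intro continuous_at_imp_continuous_on ballI differentiable_imp_continuous_within) (metis funpow_0)
  obtain \<alpha> where "0 < \<alpha>" "almost_increasing (\<lambda>r. \<psi> r / r powr \<alpha>)"
    by (rule almost_increasing_below_lower_index[of 0 \<psi>]) (use indices(1) in \<open>simp_all add: zero_ereal_def\<close>)
  then obtain c\<psi> where \<alpha>: "0 < \<alpha>" "0 < c\<psi>"
    "\<And>t s. 0 < t \<Longrightarrow> t \<le> s \<Longrightarrow> s \<le> 1 \<Longrightarrow> c\<psi> * (\<psi> t / t powr \<alpha>) \<le> \<psi> s / s powr \<alpha>"
    unfolding almost_increasing_def by blast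
  obtain \<beta> where "\<beta> < 1" "almost_decreasing (\<lambda>r. \<psi> r / r powr \<beta>)"
    by (rule almost_decreasing_above_upper_index[of \<psi> 1]) (use indices(2) in \<open>simp_all add: one_ereal_def\<close>)
  then obtain C\<beta> where \<beta>: "\<beta> < 1" "0 < C\<beta>"
    "\<And>t s. 0 < t \<Longrightarrow> t \<le> s \<Longrightarrow> s \<le> 1 \<Longrightarrow> \<psi> s / s powr \<beta> \<le> C\<beta> * (\<psi> t / t powr \<beta>)"
    unfolding almost_decreasing_def by (meson less_le_trans zero_less_one)
  obtain \<gamma> where "\<gamma> < 1" "almost_decreasing (\<lambda>r. \<phi> r / r powr \<gamma>)"
    by (rule almost_decreasing_above_upper_index[of \<phi> 1]) (use indices(3) in \<open>simp_all add: one_ereal_def\<close>)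
  then obtain C\<gamma> where \<gamma>: "\<gamma> < 1" "0 < C\<gamma>"
    "\<And>t s. 0 < t \<Longrightarrow> t \<le> s \<Longrightarrow> s \<le> 1 \<Longrightarrow> \<phi> s / s powr \<gamma> \<le> C\<gamma> * (\<phi> t / t powr \<gamma>)"
    unfolding almost_decreasing_def by (meson less_le_trans zero_less_one)
  show ?thesis
    by (rule that[of \<delta> a1 \<alpha> c\<psi> \<beta> C\<beta> \<gamma> C\<gamma>], unfold_locales)
      (use \<psi> \<phi> \<delta> \<alpha> \<beta> \<gamma> \<open>continuous_on {0<..} \<phi>\<close> in
        \<open>auto simp: admissible_modulus_def admissible_order_function_def\<close>)
qed

section \<open>The operator\<close>

locale op_B_coefficient = modulus_order_scaling +
  fixes a :: "'a::euclidean_space \<Rightarrow> 'a \<Rightarrow> real" and \<Lambda>1 \<Lambda>2 \<Lambda>3 :: real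
  assumes \<Lambda>: "0 < \<Lambda>1" "\<Lambda>1 \<le> \<Lambda>2" "1 \<le> \<Lambda>3"
    and a_range: "\<forall>x h. \<Lambda>1 \<le> a x h \<and> a x h \<le> \<Lambda>2"
    and a_measurable: "\<forall>x. (\<lambda>h. a x h) \<in> borel_measurable lborel"
    and a_holder: "\<forall>z. 0 < norm z \<and> norm z \<le> 1 \<longrightarrow>
      (\<forall>x h. 0 < norm h \<longrightarrow> \<bar>a (x + z) h - a x h\<bar> \<le> \<Lambda>3 * \<psi> (norm z))"
begin

lemma abs_a_diff_le: "\<bar>a x h - a y h\<bar> \<le> \<Lambda>2"
  using a_range[rule_format, of x h] a_range[rule_format, of y h] \<Lambda> by linarith

lemma op_B_integrand_measurable:
  assumes "continuous_on UNIV v"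
  shows "(\<lambda>h. (v (x + h) - v x) * (a x h - a x0 h) * singular_kernel \<phi> h) \<in> borel_measurable lborel"
proof -
  note [measurable] = continuous_shift_borel_measurable[OF assms] a_measurable[rule_format]
    singular_kernel_measurable[OF phi_cont phi_pos, where 'a='a]
  show ?thesis by measurable
qed

lemma op_B_integrable_bound:
  assumes cont: "continuous_on UNIV v"
    and E: "difference_energy \<phi> v x \<le> ennreal E" "0 \<le> E"
  shows "integrable lborel (\<lambda>h. (v (x + h) - v x) * (a x h - a x0 h) * singular_kernel \<phi> h)"
    and "\<bar>op_B a \<phi> x0 v x\<bar> \<le> \<Lambda>2 * E"
proof -
  note [measurable] = continuous_shift_borel_measurable[OF cont] a_measurable[rule_format]
    singular_kernel_measurable[OF phi_cont phi_pos, where 'a='a]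
  have "(\<integral>\<^sup>+ h. ennreal \<bar>(v (x + h) - v x) * (a x h - a x0 h) * singular_kernel \<phi> h\<bar> \<partial>lborel)
      \<le> (\<integral>\<^sup>+ h. ennreal \<Lambda>2 * ennreal (\<bar>v (x + h) - v x\<bar> * singular_kernel \<phi> h) \<partial>lborel)"
  proof (intro nn_integral_mono)
    fix h :: 'a
    have "\<bar>(v (x + h) - v x) * (a x h - a x0 h) * singular_kernel \<phi> h\<bar>
        = \<bar>a x h - a x0 h\<bar> * (\<bar>v (x + h) - v x\<bar> * singular_kernel \<phi> h)"
      using singular_kernel_nonneg[of h] by (simp add: abs_mult)
    also have "\<dots> \<le> \<Lambda>2 * (\<bar>v (x + h) - v x\<bar> * singular_kernel \<phi> h)"
      using abs_a_diff_le singular_kernel_nonneg[of h] by (intro mult_right_mono) auto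
    finally show "ennreal \<bar>(v (x + h) - v x) * (a x h - a x0 h) * singular_kernel \<phi> h\<bar>
        \<le> ennreal \<Lambda>2 * ennreal (\<bar>v (x + h) - v x\<bar> * singular_kernel \<phi> h)"
      using \<Lambda> singular_kernel_nonneg[of h] by (simp add: ennreal_leI flip: ennreal_mult)
  qed
  also have "\<dots> = ennreal \<Lambda>2 * difference_energy \<phi> v x"
    unfolding difference_energy_def by (rule nn_integral_cmult) measurable
  also have "\<dots> \<le> ennreal (\<Lambda>2 * E)"
    using E \<Lambda> by (simp add: ennreal_mult mult_left_mono)
  finally have bound: "(\<integral>\<^sup>+ h. ennreal \<bar>(v (x + h) - v x) * (a x h - a x0 h) * singular_kernel \<phi> h\<bar> \<partial>lborel)
      \<le> ennreal (\<Lambda>2 * E)" .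
  have "0 \<le> \<Lambda>2 * E" using \<Lambda> E by simp
  from integrable_abs_integral_le[OF _ bound this]
  show "integrable lborel (\<lambda>h. (v (x + h) - v x) * (a x h - a x0 h) * singular_kernel \<phi> h)"
    and "\<bar>op_B a \<phi> x0 v x\<bar> \<le> \<Lambda>2 * E"
    unfolding op_B_eq_integral_singular_kernel by (simp_all add: measurable)
qed

text \<open>Moving from \<open>x\<close> to \<open>x + z\<close> changes the integrand of \<open>op_B\<close> by a second
  difference of \<open>v\<close> against \<open>a (x + z) - a x0\<close>, plus a first difference of \<open>v\<close>
  against the \<open>\<psi>\<close>-small coefficient increment \<open>a (x + z) - a x\<close>.\<close>
lemma op_B_increment_le:
  assumes cont: "continuous_on UNIV v" and z: "0 < norm z" "norm z \<le> 1"
    and E1: "\<And>y. difference_energy \<phi> v y \<le> ennreal E1" "0 \<le> E1"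
    and E2: "(\<integral>\<^sup>+ h. ennreal (\<bar>v (x + z + h) - v (x + z) - (v (x + h) - v x)\<bar> * \<bar>a (x + z) h - a x0 h\<bar>
        * singular_kernel \<phi> h) \<partial>lborel) \<le> ennreal E2" "0 \<le> E2"
  shows "\<bar>op_B a \<phi> x0 v (x + z) - op_B a \<phi> x0 v x\<bar> \<le> 1 * E2 + \<Lambda>3 * \<psi> (norm z) * E1"
proof -
  let ?F = "\<lambda>y h. (v (y + h) - v y) * (a y h - a x0 h) * singular_kernel \<phi> h"
  have pointwise: "\<bar>?F (x + z) h - ?F x h\<bar> \<le> 1 * (\<bar>v (x + z + h) - v (x + z) - (v (x + h) - v x)\<bar>
      * \<bar>a (x + z) h - a x0 h\<bar> * singular_kernel \<phi> h) + \<Lambda>3 * \<psi> (norm z) * (\<bar>v (x + h) - v x\<bar> * singular_kernel \<phi> h)"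
    for h
  proof -
    let ?D2 = "v (x + z + h) - v (x + z) - (v (x + h) - v x)" and ?D1 = "v (x + h) - v x"
    have "?F (x + z) h - ?F x h = ?D2 * (a (x + z) h - a x0 h) * singular_kernel \<phi> h
        + ?D1 * ((a (x + z) h - a x h) * singular_kernel \<phi> h)"
      by (simp add: algebra_simps)
    also have "\<bar>\<dots>\<bar> \<le> \<bar>?D2 * (a (x + z) h - a x0 h) * singular_kernel \<phi> h\<bar>
        + \<bar>?D1 * ((a (x + z) h - a x h) * singular_kernel \<phi> h)\<bar>"
      by (rule abs_triangle_ineq)
    finally have "\<bar>?F (x + z) h - ?F x h\<bar> \<le> \<bar>?D2\<bar> * \<bar>a (x + z) h - a x0 h\<bar> * singular_kernel \<phi> h
        + \<bar>?D1\<bar> * (\<bar>a (x + z) h - a x h\<bar> * singular_kernel \<phi> h)"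
      using singular_kernel_nonneg[of h] by (simp add: abs_mult)
    moreover have "\<bar>a (x + z) h - a x h\<bar> * singular_kernel \<phi> h \<le> \<Lambda>3 * \<psi> (norm z) * singular_kernel \<phi> h"
      using a_holder z singular_kernel_nonneg[of h] by (cases "h = 0") (auto intro: mult_right_mono)
    ultimately show ?thesis
      by (smt (verit, best) abs_ge_zero mult.assoc mult.left_commute mult_left_mono)
  qed
  have "(\<integral>\<^sup>+ h. ennreal \<bar>?F (x + z) h - ?F x h\<bar> \<partial>lborel) \<le> ennreal (1 * E2 + \<Lambda>3 * \<psi> (norm z) * E1)"
  proof (rule nn_integral_le_lincomb[OF _ _ _ _ _ _ _ _ pointwise E2(1) E1(1)[of x, unfolded difference_energy_def]])
    show "(\<lambda>h. \<bar>v (x + z + h) - v (x + z) - (v (x + h) - v x)\<bar> * \<bar>a (x + z) h - a x0 h\<bar> * singular_kernel \<phi> h)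
        \<in> borel_measurable lborel" "(\<lambda>h. \<bar>v (x + h) - v x\<bar> * singular_kernel \<phi> h) \<in> borel_measurable lborel"
      using continuous_shift_borel_measurable[OF cont] a_measurable
        singular_kernel_measurable[OF phi_cont phi_pos, where 'a='a]
      by (auto intro!: borel_measurable_times borel_measurable_abs borel_measurable_diff)
  qed (use E1(2) E2(2) \<Lambda> psi_pos[OF z] in \<open>simp_all add: singular_kernel_nonneg\<close>)
  moreover have "0 \<le> 1 * E2 + \<Lambda>3 * \<psi> (norm z) * E1" using E1 E2 \<Lambda> psi_pos[OF z] by simp
  ultimately have "\<bar>integral\<^sup>L lborel (\<lambda>h. ?F (x + z) h - ?F x h)\<bar> \<le> 1 * E2 + \<Lambda>3 * \<psi> (norm z) * E1"
    by (intro integrable_abs_integral_le(2) borel_measurable_diff op_B_integrand_measurable cont)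
  moreover have "integral\<^sup>L lborel (\<lambda>h. ?F (x + z) h - ?F x h) = op_B a \<phi> x0 v (x + z) - op_B a \<phi> x0 v x"
    unfolding op_B_eq_integral_singular_kernel
    by (rule Bochner_Integration.integral_diff[OF op_B_integrable_bound(1)[OF cont E1] op_B_integrable_bound(1)[OF cont E1]])
  ultimately show ?thesis by simp
qed

lemma op_B_increment_near:
  assumes cont: "continuous_on UNIV v" and z: "0 < norm z" "norm z \<le> 1"
    and E1: "\<And>y. difference_energy \<phi> v y \<le> ennreal E1" "0 \<le> E1"
    and E2: "second_difference_energy \<phi> v x z \<le> ennreal (E2 * \<psi> (norm z))" "0 \<le> E2"
    and \<theta>: "\<And>h. h \<noteq> 0 \<Longrightarrow> \<bar>a (x + z) h - a x0 h\<bar> \<le> \<theta>" "0 \<le> \<theta>"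
  shows "\<bar>op_B a \<phi> x0 v (x + z) - op_B a \<phi> x0 v x\<bar> \<le> (\<theta> * E2 + \<Lambda>3 * E1) * \<psi> (norm z)"
proof -
  let ?D2 = "\<lambda>h. \<bar>v (x + z + h) - v (x + z) - (v (x + h) - v x)\<bar>"
  have pz: "0 < \<psi> (norm z)" using psi_pos z by simp
  have "(\<integral>\<^sup>+ h. ennreal (?D2 h * \<bar>a (x + z) h - a x0 h\<bar> * singular_kernel \<phi> h) \<partial>lborel)
      \<le> (\<integral>\<^sup>+ h. ennreal \<theta> * ennreal (?D2 h * singular_kernel \<phi> h) \<partial>lborel)"
  proof (intro nn_integral_mono)
    fix h :: 'a
    have "?D2 h * \<bar>a (x + z) h - a x0 h\<bar> * singular_kernel \<phi> h
        = \<bar>a (x + z) h - a x0 h\<bar> * (?D2 h * singular_kernel \<phi> h)" by (simp add: mult_ac)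
    also have "\<dots> \<le> \<theta> * (?D2 h * singular_kernel \<phi> h)"
      using \<theta> singular_kernel_nonneg[of h] by (cases "h = 0") (auto intro: mult_right_mono)
    finally have "?D2 h * \<bar>a (x + z) h - a x0 h\<bar> * singular_kernel \<phi> h \<le> \<theta> * (?D2 h * singular_kernel \<phi> h)" .
    thus "ennreal (?D2 h * \<bar>a (x + z) h - a x0 h\<bar> * singular_kernel \<phi> h)
        \<le> ennreal \<theta> * ennreal (?D2 h * singular_kernel \<phi> h)"
      using \<theta>(2) singular_kernel_nonneg[of h] by (simp add: ennreal_leI flip: ennreal_mult)
  qed
  also have "\<dots> = ennreal \<theta> * second_difference_energy \<phi> v x z"
    unfolding second_difference_energy_def
    using continuous_shift_borel_measurable[OF cont] singular_kernel_measurable[OF phi_cont phi_pos, where 'a='a]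
    by (intro nn_integral_cmult) (auto intro!: borel_measurable_times borel_measurable_abs borel_measurable_diff)
  also have "\<dots> \<le> ennreal \<theta> * ennreal (E2 * \<psi> (norm z))"
    using E2(1) by (rule mult_left_mono) simp
  also have "\<dots> = ennreal (\<theta> * (E2 * \<psi> (norm z)))"
    using \<theta>(2) E2(2) pz by (simp flip: ennreal_mult)
  finally have "\<bar>op_B a \<phi> x0 v (x + z) - op_B a \<phi> x0 v x\<bar> \<le> 1 * (\<theta> * (E2 * \<psi> (norm z))) + \<Lambda>3 * \<psi> (norm z) * E1"
    using E2(2) \<theta>(2) pz by (intro op_B_increment_le[OF cont z E1]) auto
  thus ?thesis by (simp add: algebra_simps)
qed

text \<open>Far from \<open>x0\<close>, \<open>v\<close> vanishes at \<open>x\<close>, \<open>x + z\<close> and all points within \<open>r\<close> of them,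
  so the second difference reduces to the increment \<open>v (x + h + z) - v (x + h)\<close> with
  \<open>|h| > r\<close>, where the kernel is integrable.\<close>
lemma op_B_increment_far:
  assumes cont: "continuous_on UNIV v" and z: "0 < norm z" "norm z \<le> 1" "norm z \<le> r"
    and E1: "\<And>y. difference_energy \<phi> v y \<le> ennreal E1" "0 \<le> E1"
    and support: "\<And>y. 2 * r \<le> norm (y - x0) \<Longrightarrow> v y = 0"
    and far: "4 * r < norm (x + z - x0)"
    and increment: "\<And>y. \<bar>v (y + z) - v y\<bar> \<le> \<epsilon> * \<psi> (norm z)"
    and tail: "(\<integral>\<^sup>+ h. ennreal (indicator {h. r < norm h} h * singular_kernel \<phi> (h::'a)) \<partial>lborel) \<le> ennreal KB"
      "0 \<le> KB"
  shows "\<bar>op_B a \<phi> x0 v (x + z) - op_B a \<phi> x0 v x\<bar> \<le> (\<Lambda>2 * \<epsilon> * KB + \<Lambda>3 * E1) * \<psi> (norm z)"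
proof -
  let ?D2 = "\<lambda>h. \<bar>v (x + z + h) - v (x + z) - (v (x + h) - v x)\<bar>"
  let ?c = "\<Lambda>2 * (\<epsilon> * \<psi> (norm z))"
  have pz: "0 < \<psi> (norm z)" using psi_pos z by simp
  have \<epsilon>: "0 \<le> \<epsilon>" using increment[of 0] pz by (smt (verit) zero_le_mult_iff)
  have "norm (x + z - x0) \<le> norm (x - x0) + norm z"
    using norm_triangle_ineq[of "x - x0" z] by (simp add: algebra_simps)
  hence x: "3 * r \<le> norm (x - x0)" "4 * r \<le> norm (x + z - x0)" "0 < r" using far z by linarith+
  have D2: "?D2 h \<le> \<epsilon> * \<psi> (norm z) * indicator {h. r < norm h} h" for h
  proof (cases "r < norm h")
    case True
    thus ?thesis using increment[of "x + h"] support[of x] support[of "x + z"] x by (simp add: add_ac)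
  next
    case False
    have "norm (x - x0) \<le> norm (x + h - x0) + norm h" "norm (x + z - x0) \<le> norm (x + z + h - x0) + norm h"
      using norm_triangle_ineq4[of "x + h - x0" h] norm_triangle_ineq4[of "x + z + h - x0" h]
      by (simp_all add: algebra_simps)
    hence "2 * r \<le> norm (x + h - x0)" "2 * r \<le> norm (x + z + h - x0)" using x False by linarith+
    thus ?thesis using support x False by simp
  qed
  have "(\<integral>\<^sup>+ h. ennreal (?D2 h * \<bar>a (x + z) h - a x0 h\<bar> * singular_kernel \<phi> h) \<partial>lborel)
      \<le> (\<integral>\<^sup>+ h. ennreal ?c * ennreal (indicator {h. r < norm h} h * singular_kernel \<phi> (h::'a)) \<partial>lborel)"
  proof (intro nn_integral_mono)
    fix h :: 'a
    have "?D2 h * \<bar>a (x + z) h - a x0 h\<bar> * singular_kernel \<phi> h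
        \<le> \<epsilon> * \<psi> (norm z) * indicator {h. r < norm h} h * \<Lambda>2 * singular_kernel \<phi> h"
      using D2[of h] abs_a_diff_le singular_kernel_nonneg[of h]
      by (intro mult_right_mono mult_mono) auto
    thus "ennreal (?D2 h * \<bar>a (x + z) h - a x0 h\<bar> * singular_kernel \<phi> h)
        \<le> ennreal ?c * ennreal (indicator {h. r < norm h} h * singular_kernel \<phi> h)"
      using \<epsilon> pz \<Lambda> singular_kernel_nonneg[of h] by (simp add: ennreal_leI mult_ac flip: ennreal_mult)
  qed
  also have "\<dots> = ennreal ?c * (\<integral>\<^sup>+ h. ennreal (indicator {h. r < norm h} h * singular_kernel \<phi> (h::'a)) \<partial>lborel)"
    using singular_kernel_measurable[OF phi_cont phi_pos, where 'a='a]
    by (intro nn_integral_cmult borel_measurable_times borel_measurable_indicator) auto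
  also have "\<dots> \<le> ennreal ?c * ennreal KB"
    using tail(1) by (rule mult_left_mono) simp
  also have "\<dots> = ennreal (?c * KB)" using \<epsilon> pz \<Lambda> tail(2) by (simp flip: ennreal_mult)
  finally have "\<bar>op_B a \<phi> x0 v (x + z) - op_B a \<phi> x0 v x\<bar> \<le> 1 * (?c * KB) + \<Lambda>3 * \<psi> (norm z) * E1"
    using tail(2) \<epsilon> pz \<Lambda> by (intro op_B_increment_le[OF cont z(1,2) E1]) auto
  thus ?thesis by (simp add: algebra_simps)
qed

lemma op_B_holder_bound:
  assumes cont: "continuous_on UNIV v"
    and support: "\<And>y. 2 * r \<le> norm (y - x0) \<Longrightarrow> v y = 0"
    and \<eta>: "0 < \<eta>" "\<eta> \<le> r" "\<eta> \<le> 1"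
    and sup: "\<And>x. \<bar>op_B a \<phi> x0 v x\<bar> \<le> S"
    and E1: "\<And>y. difference_energy \<phi> v y \<le> ennreal E1" "0 \<le> E1"
    and E2: "\<And>x z. 0 < norm z \<Longrightarrow> norm z \<le> 1 \<Longrightarrow>
      second_difference_energy \<phi> v x z \<le> ennreal (E2 * \<psi> (norm z))" "0 \<le> E2"
    and \<theta>: "\<And>x1 h. norm (x1 - x0) \<le> 4 * r \<Longrightarrow> h \<noteq> 0 \<Longrightarrow> \<bar>a x1 h - a x0 h\<bar> \<le> \<theta>" "0 \<le> \<theta>"
    and increment: "\<And>y z. 0 < norm z \<Longrightarrow> norm z \<le> \<eta> \<Longrightarrow> \<bar>v (y + z) - v y\<bar> \<le> \<epsilon> * \<psi> (norm z)"
      "0 \<le> \<epsilon>"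
    and tail: "(\<integral>\<^sup>+ h. ennreal (indicator {h. r < norm h} h * singular_kernel \<phi> (h::'a)) \<partial>lborel) \<le> ennreal KB"
      "0 \<le> KB"
    and z: "0 < norm z" "norm z \<le> 1"
  shows "\<bar>op_B a \<phi> x0 v (x + z) - op_B a \<phi> x0 v x\<bar>
    \<le> (2 * S / (c\<psi> * \<psi> \<eta>) + \<theta> * E2 + \<Lambda>2 * \<epsilon> * KB + \<Lambda>3 * E1) * \<psi> (norm z)"
proof -
  have pos: "0 < \<psi> (norm z)" "0 < c\<psi> * \<psi> \<eta>" using psi_pos z \<eta> c\<psi> by auto
  have nonneg: "0 \<le> 2 * S / (c\<psi> * \<psi> \<eta>)" "0 \<le> \<theta> * E2" "0 \<le> \<Lambda>2 * \<epsilon> * KB" "0 \<le> \<Lambda>3 * E1"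
    using sup[of x] pos \<theta>(2) E2(2) increment(2) tail(2) E1(2) \<Lambda> by auto
  let ?T = "2 * S / (c\<psi> * \<psi> \<eta>) + \<theta> * E2 + \<Lambda>2 * \<epsilon> * KB + \<Lambda>3 * E1"
  have weaken: "\<bar>op_B a \<phi> x0 v (x + z) - op_B a \<phi> x0 v x\<bar> \<le> ?T * \<psi> (norm z)"
    if "\<bar>op_B a \<phi> x0 v (x + z) - op_B a \<phi> x0 v x\<bar> \<le> c * \<psi> (norm z)" "c \<le> ?T" for c
    using that mult_right_mono[of c ?T "\<psi> (norm z)"] pos(1) by linarith
  consider "\<eta> < norm z" | "norm z \<le> \<eta>" "norm (x + z - x0) \<le> 4 * r" | "norm z \<le> \<eta>" "4 * r < norm (x + z - x0)"
    by linarith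
  then show ?thesis
  proof cases
    case 1
    have "\<bar>op_B a \<phi> x0 v (x + z) - op_B a \<phi> x0 v x\<bar> \<le> 2 * S"
      using sup[of "x + z"] sup[of x] by linarith
    also have "\<dots> = 2 * S / (c\<psi> * \<psi> \<eta>) * (c\<psi> * \<psi> \<eta>)" using c\<psi> psi_pos[of \<eta>] \<eta> by simp
    also have "\<dots> \<le> 2 * S / (c\<psi> * \<psi> \<eta>) * \<psi> (norm z)"
      using psi_almost_monotone[of \<eta> "norm z"] 1 z \<eta> nonneg by (intro mult_left_mono) auto
    finally show ?thesis by (rule weaken) (use nonneg in auto)
  next
    case 2
    have "\<bar>op_B a \<phi> x0 v (x + z) - op_B a \<phi> x0 v x\<bar> \<le> (\<theta> * E2 + \<Lambda>3 * E1) * \<psi> (norm z)"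
      using \<theta> 2 by (intro op_B_increment_near[OF cont z E1 E2(1)[OF z] E2(2)]) auto
    thus ?thesis by (rule weaken) (use nonneg in auto)
  next
    case 3
    have "\<bar>op_B a \<phi> x0 v (x + z) - op_B a \<phi> x0 v x\<bar> \<le> (\<Lambda>2 * \<epsilon> * KB + \<Lambda>3 * E1) * \<psi> (norm z)"
      using 3 \<eta> z increment by (intro op_B_increment_far[OF cont z _ E1 support _ _ tail]) auto
    thus ?thesis by (rule weaken) (use nonneg in auto)
  qed
qed

lemma a_oscillation_small:
  assumes "0 < \<theta>"
  obtains r where "0 < r" "r < 1/4" "\<And>x1 x0 h. norm (x1 - x0) \<le> 4 * r \<Longrightarrow> h \<noteq> 0 \<Longrightarrow> \<bar>a x1 h - a x0 h\<bar> \<le> \<theta>"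
proof -
  obtain b where b: "0 < b" "\<And>t. 0 < t \<Longrightarrow> t < b \<Longrightarrow> \<psi> t < \<theta> / \<Lambda>3"
    using order_tendstoD(2)[OF psi_tendsto_0, of "\<theta> / \<Lambda>3"] assms \<Lambda> unfolding eventually_at_right_field by auto
  show ?thesis
  proof (rule that[of "min (1/8) (b/8)"])
    fix x1 x0 :: 'a and h :: 'a assume x: "norm (x1 - x0) \<le> 4 * min (1/8) (b/8)" and h: "h \<noteq> 0"
    show "\<bar>a x1 h - a x0 h\<bar> \<le> \<theta>"
    proof (cases "x1 = x0")
      case False
      hence "\<bar>a (x0 + (x1 - x0)) h - a x0 h\<bar> \<le> \<Lambda>3 * \<psi> (norm (x1 - x0))"
        using a_holder[rule_format, where z = "x1 - x0" and x = x0 and h = h] x h by auto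
      also have "\<dots> \<le> \<Lambda>3 * (\<theta> / \<Lambda>3)"
      proof (intro mult_left_mono less_imp_le b(2))
        show "norm (x1 - x0) < b" using x b(1) by (simp add: min_def split: if_splits)
      qed (use False \<Lambda> in auto)
      finally show ?thesis using \<Lambda> by simp
    qed (use assms in simp)
  qed (use b in auto)
qed

lemma op_B_bound_constants_le:
  fixes K L :: real
  assumes "0 < e" "0 \<le> V" "0 \<le> N" "0 < \<eta>" "\<eta> \<le> 1" "0 \<le> Q" "0 \<le> KB"
  defines "S \<equiv> \<Lambda>2 * (L * V + e * (c\<psi> * \<psi> \<eta>) / (2 * \<Lambda>2) * N)"
  shows "S + (2 * S / (c\<psi> * \<psi> \<eta>) + e / (Q + 1) * (Q * N)
      + \<Lambda>2 * (e / (\<Lambda>2 * (KB + 1)) * N) * KB + \<Lambda>3 * (K * V + e / \<Lambda>3 * N))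
    \<le> (\<Lambda>2 * L + 2 * \<Lambda>2 * L / (c\<psi> * \<psi> \<eta>) + \<Lambda>3 * K) * V + 5 * e * N"
proof -
  have pos: "0 < \<Lambda>2" "0 < c\<psi> * \<psi> \<eta>" using \<Lambda> c\<psi> psi_pos assms by auto
  have "S = \<Lambda>2 * L * V + c\<psi> * \<psi> \<eta> * (e * N) / 2"
    using pos by (simp add: S_def field_simps)
  moreover have "c\<psi> * \<psi> \<eta> * (e * N) \<le> e * N" "0 \<le> e * N"
    using mult_right_mono[of "c\<psi> * \<psi> \<eta>" 1 "e * N"] psi_almost_monotone[of \<eta> 1] psi_1 assms by simp_all
  ultimately have "S \<le> \<Lambda>2 * L * V + e * N" by linarith
  moreover have "2 * S / (c\<psi> * \<psi> \<eta>) = 2 * \<Lambda>2 * L / (c\<psi> * \<psi> \<eta>) * V + e * N"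
    using pos c\<psi> psi_pos[of \<eta>] assms by (simp add: S_def field_simps)
  moreover have "e / (Q + 1) * (Q * N) \<le> e * N"
    using assms by (simp add: field_simps mult_left_mono)
  moreover have "\<Lambda>2 * (e / (\<Lambda>2 * (KB + 1)) * N) * KB = e * N * (KB / (KB + 1))"
  proof -
    have "KB + 1 \<noteq> 0" "\<Lambda>2 \<noteq> 0" using assms pos by auto
    thus ?thesis by (simp add: divide_simps)
  qed
  moreover have "e * N * (KB / (KB + 1)) \<le> e * N"
    using mult_left_mono[of "KB / (KB + 1)" 1 "e * N"] assms by simp
  moreover have "\<Lambda>3 * (K * V + e / \<Lambda>3 * N) = \<Lambda>3 * K * V + e * N"
    using \<Lambda> by (simp add: field_simps)
  moreover have "\<And>s t1 t2 t3 t4 p q r n. s \<le> p + n \<Longrightarrow> t1 = q + n \<Longrightarrow> t2 \<le> n \<Longrightarrow> t3 = u \<Longrightarrow> u \<le> n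
      \<Longrightarrow> t4 = r + n \<Longrightarrow> s + (t1 + t2 + t3 + t4) \<le> p + q + r + 5 * n" for u :: real
    by linarith
  ultimately have "S + (2 * S / (c\<psi> * \<psi> \<eta>) + e / (Q + 1) * (Q * N)
      + \<Lambda>2 * (e / (\<Lambda>2 * (KB + 1)) * N) * KB + \<Lambda>3 * (K * V + e / \<Lambda>3 * N))
    \<le> \<Lambda>2 * L * V + 2 * \<Lambda>2 * L / (c\<psi> * \<psi> \<eta>) * V + \<Lambda>3 * K * V + 5 * (e * N)"
    by blast
  also have "\<dots> = (\<Lambda>2 * L + 2 * \<Lambda>2 * L / (c\<psi> * \<psi> \<eta>) + \<Lambda>3 * K) * V + 5 * e * N"
    by (simp add: algebra_simps)
  finally show ?thesis .
qed

lemma op_B_C_norm_le: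
  assumes order: "holder_order \<psi> = 0" and e: "0 < e"
    and cont: "continuous_on UNIV v" and V: "\<And>y. \<bar>v y\<bar> \<le> V" "V \<le> N"
    and support: "{x. v x \<noteq> 0} \<subseteq> ball x0 (2 * r)"
    and \<eta>: "0 < \<eta>" "\<eta> \<le> r" "\<eta> \<le> 1"
    and E1: "\<And>y. difference_energy \<phi> v y \<le> ennreal (K * V + e / \<Lambda>3 * N)" "0 \<le> K"
    and E2: "\<And>y. difference_energy \<phi> v y \<le> ennreal (L * V + e * (c\<psi> * \<psi> \<eta>) / (2 * \<Lambda>2) * N)" "0 \<le> L"
    and Q: "\<And>x z. 0 < norm z \<Longrightarrow> norm z \<le> 1 \<Longrightarrow>
      second_difference_energy \<phi> v x z \<le> ennreal (Q * \<psi> (norm z) * N)" "0 \<le> Q"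
    and close: "\<And>x1 h. norm (x1 - x0) \<le> 4 * r \<Longrightarrow> h \<noteq> 0 \<Longrightarrow> \<bar>a x1 h - a x0 h\<bar> \<le> e / (Q + 1)"
    and increment: "\<And>y z. 0 < norm z \<Longrightarrow> norm z \<le> \<eta> \<Longrightarrow>
      \<bar>v (y + z) - v y\<bar> \<le> e / (\<Lambda>2 * (KB + 1)) * \<psi> (norm z) * N"
    and tail: "(\<integral>\<^sup>+ h. ennreal (indicator {h. r < norm h} h * singular_kernel \<phi> (h::'a)) \<partial>lborel) \<le> ennreal KB"
      "0 \<le> KB"
  shows "in_C \<psi> (op_B a \<phi> x0 v)"
    and "C_norm \<psi> (op_B a \<phi> x0 v) \<le> (\<Lambda>2 * L + 2 * \<Lambda>2 * L / (c\<psi> * \<psi> \<eta>) + \<Lambda>3 * K) * V + 5 * e * N"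
proof -
  have nonneg: "0 \<le> V" "0 \<le> N" "0 < \<Lambda>2" "0 < c\<psi> * \<psi> \<eta>" using V(1)[of 0] V(2) \<Lambda> c\<psi> psi_pos \<eta> by auto
  define S where "S = \<Lambda>2 * (L * V + e * (c\<psi> * \<psi> \<eta>) / (2 * \<Lambda>2) * N)"
  define T where "T = 2 * S / (c\<psi> * \<psi> \<eta>) + e / (Q + 1) * (Q * N)
    + \<Lambda>2 * (e / (\<Lambda>2 * (KB + 1)) * N) * KB + \<Lambda>3 * (K * V + e / \<Lambda>3 * N)"
  have sup: "\<bar>op_B a \<phi> x0 v x\<bar> \<le> S" for x
    unfolding S_def using e nonneg E2 by (intro op_B_integrable_bound(2)[OF cont]) auto
  have holder: "\<bar>op_B a \<phi> x0 v (x + z) - op_B a \<phi> x0 v x\<bar> \<le> T * \<psi> (norm z)"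
    if z: "0 < norm z" "norm z \<le> 1" for x z
    unfolding T_def
  proof (rule op_B_holder_bound[OF cont _ \<eta> sup E1(1) _ _ _ close _ _ _ tail z])
    show "2 * r \<le> norm (y - x0) \<Longrightarrow> v y = 0" for y
      using support by (force simp: dist_norm norm_minus_commute)
    show "second_difference_energy \<phi> v x z \<le> ennreal (Q * N * \<psi> (norm z))"
      if "0 < norm z" "norm z \<le> 1" for x z using Q(1)[OF that] by (simp add: mult_ac)
  qed (use e nonneg \<Lambda> E1(2) Q(2) tail(2) increment in \<open>auto simp: mult_ac\<close>)
  note estimate = in_C_order0_of_holder[where f = "op_B a \<phi> x0 v", OF order psi_tendsto_0 psi_pos sup holder]
  have "S + T \<le> (\<Lambda>2 * L + 2 * \<Lambda>2 * L / (c\<psi> * \<psi> \<eta>) + \<Lambda>3 * K) * V + 5 * e * N"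
    unfolding S_def T_def using op_B_bound_constants_le[of e V N \<eta> Q KB] e nonneg \<eta> Q(2) tail(2) by blast
  with estimate show "in_C \<psi> (op_B a \<phi> x0 v)"
    and "C_norm \<psi> (op_B a \<phi> x0 v) \<le> (\<Lambda>2 * L + 2 * \<Lambda>2 * L / (c\<psi> * \<psi> \<eta>) + \<Lambda>3 * K) * V + 5 * e * N"
    by auto
qed

lemma op_B_estimate:
  assumes controlled: "controlled_class \<phi> \<psi> P V0 N" and order: "holder_order \<psi> = 0" and \<epsilon>: "0 < \<epsilon>"
  shows "\<exists>r C. 0 < r \<and> r < 1/4 \<and> 0 < C \<and>
    (\<forall>x0 v. P v \<and> {x. v x \<noteq> 0} \<subseteq> ball x0 (2 * r) \<longrightarrow>
      in_C \<psi> (op_B a \<phi> x0 v) \<and> C_norm \<psi> (op_B a \<phi> x0 v) \<le> C * V0 v + \<epsilon> * N v)"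
proof -
  define e where "e = \<epsilon> / 5"
  have e: "0 < e" using \<epsilon> by (simp add: e_def)
  have basic: "\<And>v. P v \<Longrightarrow> continuous_on UNIV v \<and> (\<forall>y. \<bar>v y\<bar> \<le> V0 v) \<and> V0 v \<le> N v"
    and energy: "\<And>e. 0 < e \<Longrightarrow> \<exists>K\<ge>0. \<forall>v x. P v \<longrightarrow> difference_energy \<phi> v x \<le> ennreal (K * V0 v + e * N v)"
    and increments: "\<And>e. 0 < e \<Longrightarrow> \<exists>\<eta>>0. \<forall>v y z. P v \<longrightarrow> 0 < norm z \<longrightarrow> norm z \<le> \<eta> \<longrightarrow>
      \<bar>v (y + z) - v y\<bar> \<le> e * \<psi> (norm z) * N v"
    using controlled unfolding controlled_class_def by blast+
  obtain Q where Q: "0 \<le> Q" "\<And>v x z. P v \<Longrightarrow> 0 < norm z \<Longrightarrow> norm z \<le> 1 \<Longrightarrow>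
      second_difference_energy \<phi> v x z \<le> ennreal (Q * \<psi> (norm z) * N v)"
    using controlled unfolding controlled_class_def by blast
  obtain A1 where A1: "0 \<le> A1" "\<And>v x. P v \<Longrightarrow> difference_energy \<phi> v x \<le> ennreal (A1 * V0 v + e / \<Lambda>3 * N v)"
    using energy[of "e / \<Lambda>3"] e \<Lambda> by auto
  obtain r where r: "0 < r" "r < 1/4"
    and close: "\<And>x1 x0 h. norm (x1 - x0) \<le> 4 * r \<Longrightarrow> h \<noteq> 0 \<Longrightarrow> \<bar>a x1 h - a x0 h\<bar> \<le> e / (Q + 1)"
    using a_oscillation_small[of "e / (Q + 1)"] e Q(1) by auto
  define KB where "KB = 1 / (a1 * \<phi> r) * kernel_mass DIM('a) (2 * \<delta>)"
  have KB: "0 \<le> KB" using a1 phi_pos[OF r(1)] kernel_mass_nonneg delta by (simp add: KB_def)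
  obtain \<eta>0 where \<eta>0: "0 < \<eta>0" and increment: "\<And>v y z. P v \<Longrightarrow> 0 < norm z \<Longrightarrow> norm z \<le> \<eta>0 \<Longrightarrow>
      \<bar>v (y + z) - v y\<bar> \<le> e / (\<Lambda>2 * (KB + 1)) * \<psi> (norm z) * N v"
    using increments[of "e / (\<Lambda>2 * (KB + 1))"] e \<Lambda> KB by auto
  define \<eta> where "\<eta> = min \<eta>0 r"
  have \<eta>: "0 < \<eta>" "\<eta> \<le> r" "\<eta> \<le> 1" "\<eta> \<le> \<eta>0" using \<eta>0 r by (auto simp: \<eta>_def)
  have "0 < e * (c\<psi> * \<psi> \<eta>) / (2 * \<Lambda>2)" using e c\<psi> psi_pos \<eta> \<Lambda> by simp
  then obtain A2 where A2: "0 \<le> A2"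
    "\<And>v x. P v \<Longrightarrow> difference_energy \<phi> v x \<le> ennreal (A2 * V0 v + e * (c\<psi> * \<psi> \<eta>) / (2 * \<Lambda>2) * N v)"
    using energy by blast
  define C where "C = \<Lambda>2 * A2 + 2 * \<Lambda>2 * A2 / (c\<psi> * \<psi> \<eta>) + \<Lambda>3 * A1 + 1"
  have "0 \<le> \<Lambda>2 * A2 + 2 * \<Lambda>2 * A2 / (c\<psi> * \<psi> \<eta>) + \<Lambda>3 * A1"
    using A1(1) A2(1) \<Lambda> c\<psi> psi_pos[of \<eta>] \<eta> by simp
  hence C: "0 < C" by (simp add: C_def)
  show ?thesis
  proof (rule exI[of _ r], rule exI[of _ C], intro conjI allI impI r C)
    fix x0 v assume v: "P v \<and> {x. v x \<noteq> 0} \<subseteq> ball x0 (2 * r)"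
    have tail: "(\<integral>\<^sup>+ h. ennreal (indicator {h. r < norm h} h * singular_kernel \<phi> (h::'a)) \<partial>lborel)
        \<le> ennreal KB"
      unfolding KB_def by (rule nn_integral_tail_singular_kernel_le[OF r(1)])
    have "in_C \<psi> (op_B a \<phi> x0 v) \<and> C_norm \<psi> (op_B a \<phi> x0 v)
        \<le> (\<Lambda>2 * A2 + 2 * \<Lambda>2 * A2 / (c\<psi> * \<psi> \<eta>) + \<Lambda>3 * A1) * V0 v + 5 * e * N v"
      using basic[of v] v A1 A2 Q increment \<eta>
      by (intro conjI op_B_C_norm_le[OF order e, where V = "V0 v" and N = "N v" and K = A1 and L = A2
          and Q = Q and KB = KB and \<eta> = \<eta> and r = r, OF _ _ _ _ \<eta>(1-3) _ _ _ _ _ _ close _ tail KB]) auto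
    moreover have "(\<Lambda>2 * A2 + 2 * \<Lambda>2 * A2 / (c\<psi> * \<psi> \<eta>) + \<Lambda>3 * A1) * V0 v \<le> C * V0 v"
      using basic[of v] v by (intro mult_right_mono) (auto simp: C_def intro: order_trans[OF abs_ge_zero])
    ultimately show "in_C \<psi> (op_B a \<phi> x0 v)" "C_norm \<psi> (op_B a \<phi> x0 v) \<le> C * V0 v + \<epsilon> * N v"
      by (auto simp: e_def)
  qed
qed

end

theorem lemma4p4:
  fixes \<psi> \<phi> :: "real \<Rightarrow> real"
    and a :: "'a::euclidean_space \<Rightarrow> 'a \<Rightarrow> real"
    and \<Lambda>1 \<Lambda>2 \<Lambda>3 :: real
  assumes psi: "admissible_modulus \<psi>"
    and phi: "admissible_order_function \<phi>"
    and I_psi: "0 < lower_index \<psi>" "upper_index \<psi> < 1"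
    and M_phi: "upper_index \<phi> < 1"
    and I_phipsi: "0 < lower_index (\<lambda>r. \<phi> r * \<psi> r)" "upper_index (\<lambda>r. \<phi> r * \<psi> r) < 2"
    and no_nat: "\<forall>n::nat. 1 \<le> n \<longrightarrow>
        \<not> (lower_index (\<lambda>r. \<phi> r * \<psi> r) \<le> ereal (real n) \<and> ereal (real n) \<le> upper_index (\<lambda>r. \<phi> r * \<psi> r))"
    and max_lt: "max (upper_index \<phi>) (upper_index \<psi>) < lower_index (\<lambda>r. \<phi> r * \<psi> r)"
    and Lam: "0 < \<Lambda>1" "\<Lambda>1 \<le> \<Lambda>2" "1 \<le> \<Lambda>3"
    and a_range: "\<forall>x h. \<Lambda>1 \<le> a x h \<and> a x h \<le> \<Lambda>2"
    and a_meas: "\<forall>x. (\<lambda>h. a x h) \<in> borel_measurable lborel"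
    and a_cont: "\<forall>z. 0 < norm z \<and> norm z \<le> 1 \<longrightarrow>
        (\<forall>x h. 0 < norm h \<longrightarrow> \<bar>a (x + z) h - a x h\<bar> \<le> \<Lambda>3 * \<psi> (norm z))"
  shows "\<forall>\<epsilon>>0. \<exists>r C. 0 < r \<and> r < 1/4 \<and> 0 < C \<and>
     (\<forall>x0 v. in_C (\<lambda>r. \<phi> r * \<psi> r) v \<and> {x. v x \<noteq> 0} \<subseteq> ball x0 (2 * r) \<longrightarrow>
        in_C \<psi> (op_B a \<phi> x0 v) \<and>
        C_norm \<psi> (op_B a \<phi> x0 v) \<le> C * C0_norm v + \<epsilon> * C_norm (\<lambda>r. \<phi> r * \<psi> r) v)"
proof -
  obtain \<delta> a1 \<alpha> c\<psi> \<beta> C\<beta> \<gamma> C\<gamma> where scaling: "modulus_order_scaling \<psi> \<phi> \<delta> a1 \<alpha> c\<psi> \<beta> C\<beta> \<gamma> C\<gamma>"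
    using modulus_order_scaling_from_indices[OF psi phi I_psi M_phi] .
  interpret op_B_coefficient \<psi> \<phi> \<delta> a1 \<alpha> c\<psi> \<beta> C\<beta> \<gamma> C\<gamma> a \<Lambda>1 \<Lambda>2 \<Lambda>3
    using scaling Lam a_range a_meas a_cont by (intro op_B_coefficient.intro op_B_coefficient_axioms.intro)
  have "lower_index \<psi> < 1"
    using lower_index_le_upper_index[of \<psi>, OF psi_pos] I_psi(2) by (rule order.strict_trans1)
  hence "holder_order \<psi> = 0"
    using holder_order_eq[of 0 \<psi>] I_psi(1) by (simp add: zero_ereal_def one_ereal_def)
  moreover have "controlled_class \<phi> \<psi> (in_C (\<lambda>r. \<phi> r * \<psi> r)) C0_norm (C_norm (\<lambda>r. \<phi> r * \<psi> r))"
    using controlled_class_in_C I_phipsi no_nat[rule_format, of 1] by (simp add: one_ereal_def)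
  ultimately show ?thesis using op_B_estimate by blast
qed

end
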